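(* For every $\alpha,c,\beta\ge1$ and $\varepsilon>0$ there is no deterministic $\beta$-approximation algorithm for the Weighted Monotone Subset Minimization problem in the $(\alpha,c)$-extension model which runs in time $n^{O(1)}\cdot\left(\mathrm{amls}(\alpha,c,\beta)-\varepsilon\right)^{n}$, where $n=|U|$.
   Context: A set system $\mathcal{F}\subseteq 2^U$ over a finite set $U$ is monotone if $U\in\mathcal{F}$ and whenever $T\subseteq S\subseteq U$ and $T\in\mathcal{F}$ then $S\in\mathcal{F}$. An instance of the Weighted Monotone Subset Minimization problem (WSM) is a triple $(U,w,\mathcal{F})$ with $U$ finite, $w:U\to\mathbb{N}$ and $\mathcal{F}$ a monotone set system of $U$; the goal is to find $S\in\mathcal{F}$ minimizing $w(S)=\sum_{e\in S}w(e)$; $\mathrm{opt}(U,w,\mathcal{F})=\min\{w(S)\mid S\in\mathcal{F}\}$. An $\alpha$-extension oracle for $(U,w,\mathcal{F})$ is a function $\mathcal{O}:2^U\times\mathbb{N}_{\ge0}\to2^U$ such that for all $S\subseteq U$, $\ell\in\mathbb{N}_{\ge0}$: (1) $\mathcal{O}(S,\ell)\cup S\in\mathcal{F}$; (2) $w(\mathcal{O}(S,\ell))\le\alpha\cdot\min\{w(X)\mid X\subseteq U,|X|\le\ell,X\cup S\in\mathcal{F}\}$ (with $\min\emptyset=\infty$). In the $(\alpha,c)$-extension model the algorithm receives $U$ and $w$ and has oracle access to some $\alpha$-extension oracle $\mathcal{O}$ of $(U,w,\mathcal{F})$ for some monotone $\mathcal{F}$. It is a $\beta$-approximation if for every instance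 and every $\alpha$-extension oracle it returns $T\in\mathcal{F}$ with $w(T)\le\beta\cdot\mathrm{opt}(U,w,\mathcal{F})$. Its running time is the number of computation steps plus $c^{\ell}$ for every query $(S,\ell)$ issued; it runs in time $f(n)$ if this is at most $f(|U|)$ for every instance and oracle. Definition of amls: let $\mathcal{H}(x)=-x\ln x-(1-x)\ln(1-x)$ with $0\ln0=0$, $\mathcal{H}(0)=\mathcal{H}(1)=0$. For $\alpha,\beta,c\ge1$ define $\delta_{\alpha,\beta}(\kappa,\tau)=\frac{\frac{\beta}{\alpha}\kappa-\frac{\tau}{\alpha}}{1-\tau}$ if $\tau\ne1$ and $=\frac1\alpha$ if $\tau=1$; $\gamma_{\alpha,\beta}(\kappa,\tau)=(1-\frac\beta\alpha)\frac\kappa\tau+\frac1\alpha$ if $\tau\ne0$ and $=\frac1\alpha$ if $\tau=0$; $g_{\alpha,\beta,c}(\kappa,\tau)=\frac{\beta\kappa-\tau}{\alpha}\ln c-\tau\mathcal{H}(\gamma_{\alpha,\beta}(\kappa,\tau))-(1-\tau)\mathcal{H}(\delta_{\alpha,\beta}(\kappa,\tau))+\mathcal{H}(\kappa)$; $M_{\alpha,\beta}(\kappa)=\frac{\beta-\alpha}{1-\alpha\kappa}\kappa$ if $\alpha<\beta$, $0$ if $\alpha=\beta$, $\frac{\alpha-\beta}{\alpha-1}\kappa$ if $\alpha>\beta$. Then $\mathrm{amls}(\alpha,c,\beta)=\exp\left(\max_{0\le\kappa\le1/\beta}\ \min_{M_{\alpha,\beta}(\kappa)\le\tau\le\beta\kappa}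 g_{\alpha,\beta,c}(\kappa,\tau)\right)$. *)

theory Defs
  imports Complex_Main
begin

definition monotone_sys :: "nat set \<Rightarrow> nat set set \<Rightarrow> bool" where
  "monotone_sys U F \<longleftrightarrow> F \<subseteq> Pow U \<and> U \<in> F \<and>
     (\<forall>T S. T \<subseteq> S \<and> S \<subseteq> U \<and> T \<in> F \<longrightarrow> S \<in> F)"

definition wt :: "(nat \<Rightarrow> nat) \<Rightarrow> nat set \<Rightarrow> real" where
  "wt w S = real (\<Sum>e\<in>S. w e)"

definition opt :: "nat set \<Rightarrow> (nat \<Rightarrow> nat) \<Rightarrow> nat set set \<Rightarrow> real" where
  "opt U w F = Min (wt w ` F)"

text \<open>The minimum (with min of the empty set = infinity) is rendered literally:
  the answer weight is at most alpha times the weight of every admissible X.\<close>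
definition ext_oracle ::
  "real \<Rightarrow> nat set \<Rightarrow> (nat \<Rightarrow> nat) \<Rightarrow> nat set set \<Rightarrow> (nat set \<Rightarrow> nat \<Rightarrow> nat set) \<Rightarrow> bool" where
  "ext_oracle \<alpha> U w F orc \<longleftrightarrow>
     (\<forall>S l. S \<subseteq> U \<longrightarrow>
        orc S l \<subseteq> U \<and> orc S l \<union> S \<in> F \<and>
        (\<forall>X. X \<subseteq> U \<and> card X \<le> l \<and> X \<union> S \<in> F \<longrightarrow> wt w (orc S l) \<le> \<alpha> * wt w X))"

text \<open>A deterministic oracle algorithm, once U and w are given, is an (adaptive)
  decision tree: it either outputs a set, or issues a query (S,l) and continues
  depending on the oracle answer.\<close>
datatype alg = Output "nat set" | Query "nat set" nat "nat set \<Rightarrow> alg"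

primrec run_out :: "alg \<Rightarrow> (nat set \<Rightarrow> nat \<Rightarrow> nat set) \<Rightarrow> nat set" where
  "run_out (Output T) orc = T"
| "run_out (Query S l k) orc = run_out (k (orc S l)) orc"

text \<open>Running time: each query (S,l) costs c^l plus one computation step
  (a lower bound on the number of computation steps of any real algorithm).\<close>
primrec run_time :: "real \<Rightarrow> alg \<Rightarrow> (nat set \<Rightarrow> nat \<Rightarrow> nat set) \<Rightarrow> real" where
  "run_time c (Output T) orc = 0"
| "run_time c (Query S l k) orc = 1 + c ^ l + run_time c (k (orc S l)) orc"

definition is_approx ::
  "real \<Rightarrow> real \<Rightarrow> (nat set \<Rightarrow> (nat \<Rightarrow> nat) \<Rightarrow> alg) \<Rightarrow> bool" where
  "is_approx \<alpha> \<beta> A \<longleftrightarrow>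
     (\<forall>U w F orc. finite U \<and> monotone_sys U F \<and> ext_oracle \<alpha> U w F orc \<longrightarrow>
        run_out (A U w) orc \<in> F \<and> wt w (run_out (A U w) orc) \<le> \<beta> * opt U w F)"

definition runs_in_time_poly_exp ::
  "real \<Rightarrow> real \<Rightarrow> (nat set \<Rightarrow> (nat \<Rightarrow> nat) \<Rightarrow> alg) \<Rightarrow> real \<Rightarrow> bool" where
  "runs_in_time_poly_exp \<alpha> c A b \<longleftrightarrow>
     (\<exists>C::real. \<exists>d::nat. \<exists>N::nat. \<forall>U w F orc.
        finite U \<and> monotone_sys U F \<and> ext_oracle \<alpha> U w F orc \<and> card U \<ge> N \<longrightarrow>
        run_time c (A U w) orc \<le> C * real (card U) ^ d * b ^ card U)"

definition Hent :: "real \<Rightarrow> real" where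
  "Hent x = (if x = 0 \<or> x = 1 then 0 else - x * ln x - (1 - x) * ln (1 - x))"

definition delta_ab :: "real \<Rightarrow> real \<Rightarrow> real \<Rightarrow> real \<Rightarrow> real" where
  "delta_ab \<alpha> \<beta> \<kappa> \<tau> = (if \<tau> \<noteq> 1 then ((\<beta>/\<alpha>) * \<kappa> - \<tau>/\<alpha>) / (1 - \<tau>) else 1/\<alpha>)"

definition gamma_ab :: "real \<Rightarrow> real \<Rightarrow> real \<Rightarrow> real \<Rightarrow> real" where
  "gamma_ab \<alpha> \<beta> \<kappa> \<tau> = (if \<tau> \<noteq> 0 then (1 - \<beta>/\<alpha>) * (\<kappa>/\<tau>) + 1/\<alpha> else 1/\<alpha>)"

definition g_abc :: "real \<Rightarrow> real \<Rightarrow> real \<Rightarrow> real \<Rightarrow> real \<Rightarrow> real" where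
  "g_abc \<alpha> \<beta> c \<kappa> \<tau> = (\<beta> * \<kappa> - \<tau>) / \<alpha> * ln c - \<tau> * Hent (gamma_ab \<alpha> \<beta> \<kappa> \<tau>)
     - (1 - \<tau>) * Hent (delta_ab \<alpha> \<beta> \<kappa> \<tau>) + Hent \<kappa>"

definition M_ab :: "real \<Rightarrow> real \<Rightarrow> real \<Rightarrow> real" where
  "M_ab \<alpha> \<beta> \<kappa> = (if \<alpha> < \<beta> then (\<beta> - \<alpha>) / (1 - \<alpha> * \<kappa>) * \<kappa>
                    else if \<alpha> = \<beta> then 0 else (\<alpha> - \<beta>) / (\<alpha> - 1) * \<kappa>)"

text \<open>max/min rendered as Sup/Inf over the (compact) parameter ranges.\<close>
definition amls :: "real \<Rightarrow> real \<Rightarrow> real \<Rightarrow> real" where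
  "amls \<alpha> c \<beta> = exp (SUP \<kappa>\<in>{0..1/\<beta>}. INF \<tau>\<in>{M_ab \<alpha> \<beta> \<kappa>..\<beta> * \<kappa>}. g_abc \<alpha> \<beta> c \<kappa> \<tau>)"

end

theory Submission
  imports Defs "HOL-Real_Asymp.Real_Asymp"
begin

text \<open>In the hard instances
  the feasible sets are the supersets of a hidden \<open>k\<close>-set \<open>T\<close>, \<open>k \<approx> \<kappa> n\<close>, together with all sets
  of size more than \<open>\<beta> k\<close>. The oracle answers a query \<open>(S, l)\<close> by padding \<open>S\<close> up to that size,
  unless \<open>T - S\<close> has at most \<open>l\<close> elements and is more than \<open>\<alpha>\<close> times smaller than the padding;
  then it has to reveal \<open>T - S\<close>. A \<open>\<beta>\<close>-approximate output contains \<open>T\<close>, so an adversary that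
  keeps answering with the padding forces the algorithm to expose a \<open>k / n\<close> fraction of the
  \<open>n choose k\<close> candidates, about \<open>exp (n Hent \<kappa>)\<close> many.

  A query \<open>(S, l)\<close> costs \<open>c ^ l\<close> and exposes only candidates with \<open>j \<le> l\<close> elements outside
  \<open>S\<close>, where \<open>\<alpha> j + |S| < \<beta> k\<close>. Estimating binomial coefficients by entropies, there are at
  most \<open>c ^ j * exp (n (Hent \<kappa> - amls_inner \<kappa>))\<close> of them up to polynomial factors: by
  concavity of the entropy the worst queries lie on the line \<open>\<alpha> j + |S| = \<beta> k\<close>, over which
  \<open>g_abc\<close> is minimised. Hence the running time is at least \<open>exp (n amls_inner \<kappa>)\<close> up to
  polynomial factors, and choosing the best \<open>\<kappa>\<close> gives \<open>amls ^ n\<close>.\<close>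

section \<open>Entropy of a split\<close>

definition xlnx :: "real \<Rightarrow> real" where
  "xlnx t = t * ln t"

text \<open>\<open>ent m r = m * Hent (r / m)\<close> for \<open>0 \<le> r \<le> m\<close>, \<open>m > 0\<close>; up to polynomial factors
  \<open>exp (ent m r)\<close> is the binomial coefficient \<open>m choose r\<close>.\<close>
definition ent :: "real \<Rightarrow> real \<Rightarrow> real" where
  "ent m r = xlnx m - xlnx r - xlnx (m - r)"

lemma xlnx_0 [simp]: "xlnx 0 = 0" and xlnx_1 [simp]: "xlnx 1 = 0"
  by (simp_all add: xlnx_def)

lemma ent_0_right [simp]: "ent m 0 = 0" and ent_same [simp]: "ent m m = 0"
  by (simp_all add: ent_def)

lemma Hent_eq_ent: "Hent x = ent 1 x"
  by (simp add: Hent_def ent_def xlnx_def)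

lemma xlnx_mult:
  assumes "t > 0" "m \<ge> 0"
  shows "xlnx (t * m) = t * xlnx m + t * m * ln t"
  using assms by (cases "m = 0") (auto simp: xlnx_def ln_mult algebra_simps)

lemma ent_scale:
  assumes "t \<ge> 0" "0 \<le> r" "r \<le> m"
  shows "ent (t * m) (t * r) = t * ent m r"
proof (cases "t = 0")
  case False
  with assms have "t > 0" by simp
  then have parts: "xlnx (t * m) = t * xlnx m + t * m * ln t" "xlnx (t * r) = t * xlnx r + t * r * ln t"
    "xlnx (t * (m - r)) = t * xlnx (m - r) + t * (m - r) * ln t"
    using assms by (simp_all add: xlnx_mult)
  have "ent (t * m) (t * r) = xlnx (t * m) - xlnx (t * r) - xlnx (t * (m - r))"
    by (simp add: ent_def right_diff_distrib)
  also have "\<dots> = t * ent m r"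
    unfolding parts ent_def by (simp add: algebra_simps)
  finally show ?thesis .
qed (simp add: ent_def)

lemma ent_eq_Hent:
  assumes "t > 0" "0 \<le> r" "r \<le> t"
  shows "ent t r = t * Hent (r / t)"
  using ent_scale[of t "r / t" 1] assms by (simp add: Hent_eq_ent)

lemma gibbs_inequality:
  assumes "b \<ge> 0" "q \<ge> 0" "b > 0 \<Longrightarrow> q > 0"
  shows "b - q \<le> xlnx b - b * ln q"
proof (cases "b = 0")
  case False
  with assms have pos: "b > 0" "q > 0" by auto
  then have "b * ln (q / b) \<le> b * (q / b - 1)"
    by (intro mult_left_mono ln_le_minus_one) auto
  with pos show ?thesis by (simp add: xlnx_def ln_div algebra_simps)
qed (use assms in simp)

lemma xlnx_ge: "t \<ge> 0 \<Longrightarrow> t - 1 \<le> xlnx t"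
  using gibbs_inequality[of t 1] by simp

lemma log_sum_inequality:
  assumes "a1 \<ge> 0" "a2 \<ge> 0" "b1 \<ge> 0" "b2 \<ge> 0" "a1 > 0 \<Longrightarrow> b1 > 0" "a2 > 0 \<Longrightarrow> b2 > 0"
  shows "xlnx (a1 + a2) - (a1 + a2) * ln (b1 + b2) \<le> (xlnx a1 - a1 * ln b1) + (xlnx a2 - a2 * ln b2)"
proof (cases "a1 + a2 = 0")
  case False
  define A B where "A = a1 + a2" and "B = b1 + b2"
  have "a1 > 0 \<or> a2 > 0" using False assms by linarith
  then have pos: "A > 0" "B > 0" using assms unfolding A_def B_def by auto
  have summand: "a - b * A / B \<le> xlnx a - a * (ln b + ln A - ln B)"
    if "a \<ge> 0" "b \<ge> 0" "a > 0 \<Longrightarrow> b > 0" for a b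
  proof (cases "a = 0")
    case False
    with that have "ln (b * A / B) = ln b + ln A - ln B" using pos by (simp add: ln_mult ln_div)
    with gibbs_inequality[of a "b * A / B"] that pos show ?thesis by simp
  qed (use that pos in simp)
  have "a1 - b1 * A / B + (a2 - b2 * A / B) = 0"
    using pos unfolding A_def B_def by (simp add: field_simps)
  moreover have "A * ln A = a1 * ln A + a2 * ln A" "A * ln B = a1 * ln B + a2 * ln B"
    unfolding A_def by (simp_all add: distrib_right)
  ultimately show ?thesis
    using summand[of a1 b1] summand[of a2 b2] assms
    unfolding A_def[symmetric] B_def[symmetric] xlnx_def by (simp add: algebra_simps)
next
  case True
  with assms have "a1 = 0" "a2 = 0" by auto
  then show ?thesis by simp
qed

lemma ent_superadditive:
  assumes "0 \<le> r1" "r1 \<le> m1" "0 \<le> r2" "r2 \<le> m2"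
  shows "ent m1 r1 + ent m2 r2 \<le> ent (m1 + m2) (r1 + r2)"
proof -
  have split: "ent m r = - (xlnx r - r * ln m) - (xlnx (m - r) - (m - r) * ln m)" for m r
    by (simp add: ent_def xlnx_def algebra_simps)
  have "xlnx (r1 + r2) - (r1 + r2) * ln (m1 + m2) \<le> (xlnx r1 - r1 * ln m1) + (xlnx r2 - r2 * ln m2)"
    using assms by (intro log_sum_inequality) auto
  moreover have "xlnx ((m1 - r1) + (m2 - r2)) - ((m1 - r1) + (m2 - r2)) * ln (m1 + m2)
      \<le> (xlnx (m1 - r1) - (m1 - r1) * ln m1) + (xlnx (m2 - r2) - (m2 - r2) * ln m2)"
    using assms by (intro log_sum_inequality) auto
  ultimately show ?thesis
    unfolding split[of m1] split[of m2] split[of "m1 + m2"] by (simp add: algebra_simps)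
qed

lemma ent_nonneg:
  assumes "0 \<le> r" "r \<le> m"
  shows "0 \<le> ent m r"
  using ent_superadditive[of r r 0 "m - r"] assms by simp

lemma ent_concave:
  assumes "0 \<le> r1" "r1 \<le> m1" "0 \<le> r2" "r2 \<le> m2" "0 \<le> t" "t \<le> 1"
  shows "(1 - t) * ent m1 r1 + t * ent m2 r2 \<le> ent ((1 - t) * m1 + t * m2) ((1 - t) * r1 + t * r2)"
  using ent_superadditive[of "(1 - t) * r1" "(1 - t) * m1" "t * r2" "t * m2"] assms
  by (simp add: ent_scale mult_left_mono)

lemma ent_1_le_1: "0 \<le> \<kappa> \<Longrightarrow> \<kappa> \<le> 1 \<Longrightarrow> ent 1 \<kappa> \<le> 1"
  using xlnx_ge[of \<kappa>] xlnx_ge[of "1 - \<kappa>"] by (simp add: ent_def)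

section \<open>Binomial coefficients and entropy\<close>

lemma binomial_term_eq_exp_ent:
  fixes m r :: nat
  assumes "0 < r" "r < m"
  shows "(r / m) ^ r * (1 - r / m) ^ (m - r) = exp (- ent m r)"
proof -
  have m: "real m > 0" "real (m - r) = real m - real r" using assms by (auto simp: of_nat_diff)
  have "1 - r / m = real (m - r) / m" using m by (simp add: field_simps)
  moreover have "x ^ i = exp (i * ln x)" if "x > 0" for x :: real and i :: nat
    using that by (simp add: exp_of_nat_mult)
  ultimately have "(r / m) ^ r * (1 - r / m) ^ (m - r) = exp (r * ln (r / m) + (m - r) * ln ((m - r) / m))"
    using assms by (simp add: exp_add)
  also have "r * ln (r / m) + (m - r) * ln ((m - r) / m) = - ent m r"
    using assms m by (simp add: ln_div ent_def xlnx_def algebra_simps)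
  finally show ?thesis .
qed

lemma binomial_le_exp_ent:
  fixes m r :: nat
  assumes "r \<le> m"
  shows "real (m choose r) \<le> exp (ent m r)"
proof (cases "0 < r \<and> r < m")
  case True
  define p where "p = real r / real m"
  have p: "0 \<le> p" "p \<le> 1" using True unfolding p_def by auto
  have "real (m choose r) * p ^ r * (1 - p) ^ (m - r) \<le> (\<Sum>i\<le>m. real (m choose i) * p ^ i * (1 - p) ^ (m - i))"
    using assms p by (intro member_le_sum) auto
  also have "\<dots> = 1"
    using binomial_ring[of p "1 - p" m] by simp
  finally show ?thesis
    using binomial_term_eq_exp_ent[of r m] True unfolding p_def by (simp add: mult.assoc exp_minus field_simps)
qed (use assms in \<open>auto simp: le_less\<close>)

lemma binomial_term_Suc_ratio:
  fixes n k i :: nat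
  assumes "0 < k" "k < n" "i < n"
  defines "p \<equiv> real k / real n"
  shows "real (n choose Suc i) * p ^ Suc i * (1 - p) ^ (n - Suc i) * ((real i + 1) * (real n - real k))
    = real (n choose i) * p ^ i * (1 - p) ^ (n - i) * ((real n - real i) * real k)"
proof -
  have "Suc i * (n choose Suc i) = n * ((n - 1) choose i)"
    by (rule binomial_absorption)
  also have "\<dots> = (n - i) * (n choose i)"
    by (rule binomial_absorb_comp[symmetric])
  finally have "real (Suc i * (n choose Suc i)) = real ((n - i) * (n choose i))"
    by (simp only:)
  then have binom: "real (n choose Suc i) * (i + 1) = real (n choose i) * (n - i)"
    using assms by (simp add: of_nat_diff algebra_simps)
  have pow: "(1 - p) ^ (n - i) = (1 - p) ^ (n - Suc i) * (1 - p)"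
    using assms by (simp flip: power_Suc2 add: Suc_diff_Suc)
  have "real (n choose Suc i) * p ^ Suc i * (1 - p) ^ (n - Suc i) * ((real i + 1) * (real n - real k))
      = (real (n choose Suc i) * (i + 1)) * (p ^ i * p) * ((1 - p) ^ (n - Suc i) * (1 - p)) * n"
    using assms by (simp add: p_def field_simps)
  also have "\<dots> = real (n choose i) * p ^ i * (1 - p) ^ (n - i) * (n - i) * p * n"
    unfolding binom pow[symmetric] by (simp add: ac_simps)
  also have "\<dots> = real (n choose i) * p ^ i * (1 - p) ^ (n - i) * ((real n - real i) * real k)"
    using assms by (simp add: p_def of_nat_diff field_simps)
  finally show ?thesis .
qed

lemma binomial_term_le_mode:
  fixes n k i :: nat
  assumes "0 < k" "k < n" "i \<le> n"
  defines "p \<equiv> real k / real n"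
  shows "real (n choose i) * p ^ i * (1 - p) ^ (n - i) \<le> real (n choose k) * p ^ k * (1 - p) ^ (n - k)"
proof -
  define t where "t i = real (n choose i) * p ^ i * (1 - p) ^ (n - i)" for i
  have ratio: "t (Suc i) * ((real i + 1) * (real n - real k)) = t i * ((real n - real i) * real k)"
    if "i < n" for i
    using binomial_term_Suc_ratio[OF assms(1,2) that] by (simp add: t_def p_def)
  have t_nonneg: "t i \<ge> 0" for i
    using assms unfolding t_def p_def by simp
  have gap: "0 < (real i + 1) * (real n - real k)" for i
    using assms by simp
  have expand: "(real n - real i) * real k = real k * real n - real i * real k"
    "(real i + 1) * (real n - real k) = real i * real n + real n - real i * real k - real k" for i
    by (simp_all add: algebra_simps)
  have up: "t i \<le> t (Suc i)" if "i \<in> {..<k}" for i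
  proof -
    have "(real i + 1) * real n \<le> real k * real n" using that by (intro mult_right_mono) auto
    then have "real i * real n + real n \<le> real k * real n" by (simp add: distrib_right)
    then have "(real i + 1) * (real n - real k) \<le> (real n - real i) * real k"
      unfolding expand by linarith
    then have "t i * ((real i + 1) * (real n - real k)) \<le> t (Suc i) * ((real i + 1) * (real n - real k))"
      using ratio[of i] that assms t_nonneg[of i] by (simp add: mult_left_mono)
    then show ?thesis using gap[of i] by (rule mult_right_le_imp_le)
  qed
  have down: "t (Suc i) \<le> t i" if "i \<in> {k..<n}" for i
  proof -
    have "real k * real n \<le> real i * real n" "real k \<le> real n"
      using that assms by (auto intro: mult_right_mono)
    then have "(real n - real i) * real k \<le> (real i + 1) * (real n - real k)"
      unfolding expand by linarith
    then have "t (Suc i) * ((real i + 1) * (real n - real k)) \<le> t i * ((real i + 1) * (real n - real k))"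
      using ratio[of i] that t_nonneg[of i] by (simp add: mult_left_mono)
    then show ?thesis using gap[of i] by (rule mult_right_le_imp_le)
  qed
  show ?thesis
  proof (cases "i \<le> k")
    case True
    have "t i \<le> t k" by (rule lift_Suc_mono_le_ivl[of "{..<k}"]) (use True up in auto)
    then show ?thesis unfolding t_def .
  next
    case False
    have "t i \<le> t k" by (rule lift_Suc_antimono_le_ivl[of "{k..<n}"]) (use False down assms in auto)
    then show ?thesis unfolding t_def .
  qed
qed

lemma exp_ent_le_binomial:
  fixes n k :: nat
  assumes "k \<le> n"
  shows "exp (ent n k) \<le> (n + 1) * real (n choose k)"
proof (cases "0 < k \<and> k < n")
  case True
  define p where "p = real k / real n"
  have "1 = (\<Sum>i\<le>n. real (n choose i) * p ^ i * (1 - p) ^ (n - i))"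
    using binomial_ring[of p "1 - p" n] by simp
  also have "\<dots> \<le> (\<Sum>i\<le>n. real (n choose k) * p ^ k * (1 - p) ^ (n - k))"
    using True unfolding p_def by (intro sum_mono binomial_term_le_mode) auto
  also have "\<dots> = (n + 1) * real (n choose k) * exp (- ent n k)"
    using binomial_term_eq_exp_ent[of k n] True unfolding p_def by (simp add: mult.assoc)
  finally show ?thesis by (simp add: exp_minus field_simps)
qed (use assms in \<open>auto simp: le_less\<close>)

section \<open>The exponent of amls\<close>

definition amls_inner :: "real \<Rightarrow> real \<Rightarrow> real \<Rightarrow> real \<Rightarrow> real" where
  "amls_inner \<alpha> \<beta> c \<kappa> = (INF \<tau>\<in>{M_ab \<alpha> \<beta> \<kappa>..\<beta> * \<kappa>}. g_abc \<alpha> \<beta> c \<kappa> \<tau>)"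

lemma amls_eq_exp_SUP_amls_inner: "amls \<alpha> c \<beta> = exp (SUP \<kappa>\<in>{0..1/\<beta>}. amls_inner \<alpha> \<beta> c \<kappa>)"
  unfolding amls_def amls_inner_def ..

text \<open>For a query set of size \<open>\<tau> n\<close>, \<open>n * exposed_rate c \<kappa> \<tau> \<iota>\<close> is, up to lower order terms, the
  logarithm of the number of \<open>\<kappa> n\<close>-sets with \<open>\<iota> n\<close> elements outside the query set, minus the
  logarithm of the cost \<open>c ^ (\<iota> n)\<close> of a query that exposes them.\<close>
definition exposed_rate :: "real \<Rightarrow> real \<Rightarrow> real \<Rightarrow> real \<Rightarrow> real" where
  "exposed_rate c \<kappa> \<tau> \<iota> = ent \<tau> (\<kappa> - \<iota>) + ent (1 - \<tau>) \<iota> - ln c * \<iota>"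

text \<open>The relative sizes for which a \<open>\<kappa> n\<close>-set can have \<open>(\<kappa> - \<iota>) n\<close> elements inside and \<open>\<iota> n\<close>
  elements outside a \<open>\<tau> n\<close>-set.\<close>
definition split_point :: "real \<Rightarrow> real \<Rightarrow> real \<Rightarrow> bool" where
  "split_point \<kappa> \<tau> \<iota> \<longleftrightarrow> 0 \<le> \<iota> \<and> \<iota> \<le> \<kappa> \<and> \<kappa> - \<iota> \<le> \<tau> \<and> \<iota> \<le> 1 - \<tau>"

lemma exposed_rate_le:
  assumes "split_point \<kappa> \<tau> \<iota>"
  shows "exposed_rate c \<kappa> \<tau> \<iota> \<le> ent 1 \<kappa> - ln c * \<iota>"
  using ent_superadditive[of "\<kappa> - \<iota>" \<tau> \<iota> "1 - \<tau>"] assms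
  by (simp add: exposed_rate_def split_point_def)

lemma exposed_rate_concave:
  assumes "split_point \<kappa> \<tau>1 \<iota>1" "split_point \<kappa> \<tau>2 \<iota>2" "0 \<le> t" "t \<le> 1"
  shows "(1 - t) * exposed_rate c \<kappa> \<tau>1 \<iota>1 + t * exposed_rate c \<kappa> \<tau>2 \<iota>2
    \<le> exposed_rate c \<kappa> ((1 - t) * \<tau>1 + t * \<tau>2) ((1 - t) * \<iota>1 + t * \<iota>2)"
proof -
  have "(1 - t) * ent \<tau>1 (\<kappa> - \<iota>1) + t * ent \<tau>2 (\<kappa> - \<iota>2)
      \<le> ent ((1 - t) * \<tau>1 + t * \<tau>2) ((1 - t) * (\<kappa> - \<iota>1) + t * (\<kappa> - \<iota>2))"
    using assms by (intro ent_concave) (auto simp: split_point_def)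
  moreover have "(1 - t) * ent (1 - \<tau>1) \<iota>1 + t * ent (1 - \<tau>2) \<iota>2
      \<le> ent ((1 - t) * (1 - \<tau>1) + t * (1 - \<tau>2)) ((1 - t) * \<iota>1 + t * \<iota>2)"
    using assms by (intro ent_concave) (auto simp: split_point_def)
  moreover have "(1 - t) * (\<kappa> - \<iota>1) + t * (\<kappa> - \<iota>2) = \<kappa> - ((1 - t) * \<iota>1 + t * \<iota>2)"
    "(1 - t) * (1 - \<tau>1) + t * (1 - \<tau>2) = 1 - ((1 - t) * \<tau>1 + t * \<tau>2)"
    by (simp_all add: algebra_simps)
  ultimately show ?thesis
    by (simp add: exposed_rate_def algebra_simps)
qed

lemma M_ab_nonneg:
  assumes "\<alpha> \<ge> 1" "\<beta> \<ge> 1" "0 \<le> \<kappa>" "\<beta> * \<kappa> \<le> 1"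
  shows "0 \<le> M_ab \<alpha> \<beta> \<kappa>"
proof -
  have "\<alpha> * \<kappa> \<le> 1" if "\<alpha> < \<beta>"
    using that assms mult_right_mono[of \<alpha> \<beta> \<kappa>] by linarith
  then show ?thesis
    using assms by (auto simp: M_ab_def)
qed

lemma M_ab_le:
  assumes "\<alpha> \<ge> 1" "\<beta> \<ge> 1" "0 \<le> \<kappa>" "\<beta> * \<kappa> \<le> 1"
  shows "M_ab \<alpha> \<beta> \<kappa> \<le> \<beta> * \<kappa>"
proof (cases "\<alpha> < \<beta> \<and> \<kappa> > 0")
  case True
  then have "\<alpha> * \<kappa> < 1"
    using assms mult_strict_right_mono[of \<alpha> \<beta> \<kappa>] by linarith
  moreover have "(\<beta> - \<alpha>) * \<kappa> \<le> \<beta> * \<kappa> * (1 - \<alpha> * \<kappa>)"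
    using assms mult_right_mono[of "\<alpha> * (\<beta> * \<kappa>)" \<alpha> \<kappa>] by (simp add: algebra_simps)
  ultimately show ?thesis
    using True by (simp add: M_ab_def divide_le_eq)
next
  case False
  have "(\<alpha> - \<beta>) / (\<alpha> - 1) \<le> \<beta>" if "\<alpha> > \<beta>"
    using that assms mult_left_mono[of 1 \<beta> \<alpha>] by (simp add: divide_le_eq algebra_simps)
  then show ?thesis
    using False assms mult_right_mono[of "(\<alpha> - \<beta>) / (\<alpha> - 1)" \<beta> \<kappa>] by (auto simp: M_ab_def)
qed

lemma bounds_of_M_ab_le:
  assumes ab: "\<alpha> \<ge> 1" "\<beta> \<ge> 1" and \<kappa>: "0 \<le> \<kappa>" "\<beta> * \<kappa> \<le> 1" and \<tau>: "M_ab \<alpha> \<beta> \<kappa> \<le> \<tau>"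
  shows "(\<beta> - \<alpha>) * \<kappa> \<le> \<tau>" "(\<alpha> - \<beta>) * \<kappa> \<le> (\<alpha> - 1) * \<tau>"
proof -
  have "0 \<le> \<tau>" using M_ab_nonneg[OF ab \<kappa>] \<tau> by linarith
  show "(\<beta> - \<alpha>) * \<kappa> \<le> \<tau>"
  proof (cases "\<alpha> < \<beta> \<and> \<kappa> > 0")
    case True
    then have "\<alpha> * \<kappa> < 1" using ab \<kappa> mult_strict_right_mono[of \<alpha> \<beta> \<kappa>] by linarith
    then have "(\<beta> - \<alpha>) * \<kappa> \<le> (\<beta> - \<alpha>) * \<kappa> / (1 - \<alpha> * \<kappa>)"
      using True \<kappa> ab mult_nonneg_nonneg[of \<alpha> \<kappa>] by (simp add: le_divide_eq mult_left_le)
    with True \<tau> show ?thesis by (simp add: M_ab_def)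
  next
    case False
    with \<kappa> \<open>0 \<le> \<tau>\<close> show ?thesis
      by (cases "\<kappa> = 0") (auto intro: order_trans[OF mult_nonpos_nonneg])
  qed
  show "(\<alpha> - \<beta>) * \<kappa> \<le> (\<alpha> - 1) * \<tau>"
  proof (cases "\<alpha> > \<beta>")
    case True
    with \<tau> ab show ?thesis by (simp add: M_ab_def field_simps)
  next
    case False
    then have "(\<alpha> - \<beta>) * \<kappa> \<le> 0" using \<kappa> by (simp add: mult_nonpos_nonneg)
    moreover have "0 \<le> (\<alpha> - 1) * \<tau>" using ab \<open>0 \<le> \<tau>\<close> by simp
    ultimately show ?thesis by linarith
  qed
qed

lemma split_point_on_line:
  assumes ab: "\<alpha> \<ge> 1" "\<beta> \<ge> 1" and \<kappa>: "0 \<le> \<kappa>" "\<beta> * \<kappa> \<le> 1"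
    and \<tau>: "M_ab \<alpha> \<beta> \<kappa> \<le> \<tau>" "\<tau> \<le> \<beta> * \<kappa>"
  shows "split_point \<kappa> \<tau> ((\<beta> * \<kappa> - \<tau>) / \<alpha>)"
proof -
  define \<iota> where "\<iota> = (\<beta> * \<kappa> - \<tau>) / \<alpha>"
  have \<alpha>\<iota>: "\<alpha> * \<iota> = \<beta> * \<kappa> - \<tau>" using ab by (simp add: \<iota>_def)
  note bounds = bounds_of_M_ab_le[OF ab \<kappa> \<tau>(1)]
  have "(\<alpha> - 1) * \<tau> \<le> (\<alpha> - 1) * 1" using ab \<kappa> \<tau> by (intro mult_left_mono) auto
  then have "\<alpha> * \<iota> \<le> \<alpha> * (1 - \<tau>)" "\<alpha> * \<iota> \<le> \<alpha> * \<kappa>" "\<alpha> * (\<kappa> - \<iota>) \<le> \<alpha> * \<tau>"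
    using \<alpha>\<iota> \<kappa> bounds by (simp_all add: algebra_simps)
  moreover have "0 \<le> \<iota>" using ab \<tau> by (simp add: \<iota>_def)
  ultimately show ?thesis using ab by (simp add: split_point_def \<iota>_def[symmetric])
qed

lemma g_abc_on_line:
  assumes "\<alpha> \<ge> 1" and "split_point \<kappa> \<tau> \<iota>" and "\<alpha> * \<iota> + \<tau> = \<beta> * \<kappa>"
  shows "g_abc \<alpha> \<beta> c \<kappa> \<tau> = ent 1 \<kappa> - exposed_rate c \<kappa> \<tau> \<iota>"
proof -
  have \<iota>: "\<iota> = (\<beta> * \<kappa> - \<tau>) / \<alpha>" using assms by (simp add: field_simps)
  have "\<tau> * Hent (gamma_ab \<alpha> \<beta> \<kappa> \<tau>) = ent \<tau> (\<kappa> - \<iota>)"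
  proof (cases "\<tau> = 0")
    case False
    with assms have "gamma_ab \<alpha> \<beta> \<kappa> \<tau> = (\<kappa> - \<iota>) / \<tau>"
      by (simp add: gamma_ab_def \<iota> field_simps)
    with False assms show ?thesis by (simp add: ent_eq_Hent split_point_def)
  next
    case True
    with assms have "\<kappa> - \<iota> = 0" by (simp add: split_point_def)
    with True show ?thesis by simp
  qed
  moreover have "(1 - \<tau>) * Hent (delta_ab \<alpha> \<beta> \<kappa> \<tau>) = ent (1 - \<tau>) \<iota>"
  proof (cases "\<tau> = 1")
    case False
    with assms have "delta_ab \<alpha> \<beta> \<kappa> \<tau> = \<iota> / (1 - \<tau>)"
      by (simp add: delta_ab_def \<iota> field_simps)
    with False assms show ?thesis by (simp add: ent_eq_Hent split_point_def)
  next
    case True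
    with assms have "\<iota> = 0" by (simp add: split_point_def)
    with True show ?thesis by simp
  qed
  ultimately show ?thesis
    by (simp add: g_abc_def exposed_rate_def Hent_eq_ent \<iota>)
qed

lemma g_abc_nonneg:
  assumes "\<alpha> \<ge> 1" "\<beta> \<ge> 1" "c \<ge> 1" "0 \<le> \<kappa>" "\<beta> * \<kappa> \<le> 1"
    and "M_ab \<alpha> \<beta> \<kappa> \<le> \<tau>" "\<tau> \<le> \<beta> * \<kappa>"
  shows "0 \<le> g_abc \<alpha> \<beta> c \<kappa> \<tau>"
proof -
  define \<iota> where "\<iota> = (\<beta> * \<kappa> - \<tau>) / \<alpha>"
  have "split_point \<kappa> \<tau> \<iota>" using split_point_on_line assms unfolding \<iota>_def by blast
  moreover have "\<alpha> * \<iota> + \<tau> = \<beta> * \<kappa>" using assms by (simp add: \<iota>_def)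
  moreover have "0 \<le> ln c * \<iota>"
    using assms \<open>split_point \<kappa> \<tau> \<iota>\<close> by (simp add: split_point_def)
  ultimately show ?thesis
    using g_abc_on_line exposed_rate_le[of \<kappa> \<tau> \<iota> c] assms by simp
qed

lemma amls_inner_le:
  assumes "\<alpha> \<ge> 1" "\<beta> \<ge> 1" "c \<ge> 1" "0 \<le> \<kappa>" "\<beta> * \<kappa> \<le> 1"
    and "M_ab \<alpha> \<beta> \<kappa> \<le> \<tau>" "\<tau> \<le> \<beta> * \<kappa>"
  shows "amls_inner \<alpha> \<beta> c \<kappa> \<le> g_abc \<alpha> \<beta> c \<kappa> \<tau>"
  unfolding amls_inner_def
proof (rule cINF_lower)
  show "bdd_below (g_abc \<alpha> \<beta> c \<kappa> ` {M_ab \<alpha> \<beta> \<kappa>..\<beta> * \<kappa>})"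
    using g_abc_nonneg assms by (intro bdd_belowI[where m = 0]) auto
qed (use assms in simp)

lemma amls_inner_nonneg:
  assumes "\<alpha> \<ge> 1" "\<beta> \<ge> 1" "c \<ge> 1" "0 \<le> \<kappa>" "\<beta> * \<kappa> \<le> 1"
  shows "0 \<le> amls_inner \<alpha> \<beta> c \<kappa>"
  unfolding amls_inner_def
  using M_ab_le g_abc_nonneg assms by (intro cINF_greatest) auto

lemma amls_inner_le_1:
  assumes "\<alpha> \<ge> 1" "\<beta> \<ge> 1" "c \<ge> 1" "0 \<le> \<kappa>" "\<beta> * \<kappa> \<le> 1"
  shows "amls_inner \<alpha> \<beta> c \<kappa> \<le> 1"
proof -
  have "\<kappa> \<le> \<beta> * \<kappa>" using assms mult_right_mono[of 1 \<beta> \<kappa>] by simp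
  then have "split_point \<kappa> (\<beta> * \<kappa>) 0" using assms by (simp add: split_point_def)
  then have "g_abc \<alpha> \<beta> c \<kappa> (\<beta> * \<kappa>) = ent 1 \<kappa> - ent (\<beta> * \<kappa>) \<kappa>"
    using assms by (simp add: g_abc_on_line exposed_rate_def)
  moreover have "0 \<le> ent (\<beta> * \<kappa>) \<kappa>" "ent 1 \<kappa> \<le> 1"
    using \<open>\<kappa> \<le> \<beta> * \<kappa>\<close> assms by (auto intro: ent_nonneg ent_1_le_1)
  ultimately show ?thesis
    using amls_inner_le[of \<alpha> \<beta> c \<kappa> "\<beta> * \<kappa>"] M_ab_le assms by simp
qed

lemma amls_inner_0_le:
  assumes "\<alpha> \<ge> 1" "\<beta> \<ge> 1" "c \<ge> 1"
  shows "amls_inner \<alpha> \<beta> c 0 \<le> 0"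
proof -
  have "g_abc \<alpha> \<beta> c 0 0 = 0"
    using g_abc_on_line[of \<alpha> 0 0 0 \<beta> c] assms by (simp add: split_point_def exposed_rate_def)
  then show ?thesis
    using amls_inner_le[of \<alpha> \<beta> c 0 0] assms by (simp add: M_ab_def)
qed

lemma M_ab_le_on_line:
  assumes "\<beta> \<ge> 1" "\<beta> \<le> \<alpha>" "split_point \<kappa> \<tau> \<iota>" "\<alpha> * \<iota> + \<tau> = \<beta> * \<kappa>"
  shows "M_ab \<alpha> \<beta> \<kappa> \<le> \<tau>"
proof (cases "\<alpha> = \<beta>")
  case False
  with assms have "\<alpha> - 1 > 0" "\<alpha> > \<beta>" by auto
  have "\<alpha> * (\<kappa> - \<iota>) \<le> \<alpha> * \<tau>" using assms by (simp add: split_point_def)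
  then have "(\<alpha> - \<beta>) * \<kappa> \<le> (\<alpha> - 1) * \<tau>" using assms(4) by (simp add: algebra_simps)
  with \<open>\<alpha> - 1 > 0\<close> \<open>\<alpha> > \<beta>\<close> show ?thesis by (simp add: M_ab_def pos_divide_le_eq mult.commute)
qed (use assms in \<open>simp add: M_ab_def split_point_def\<close>)

text \<open>For \<open>\<alpha> < \<beta>\<close>, at \<open>\<tau> = M_ab \<alpha> \<beta> \<kappa>\<close> both parts of the split have density \<open>\<kappa>\<close>, so the two
  entropy terms of \<open>g_abc\<close> cancel \<open>Hent \<kappa>\<close> and only the cost term remains.\<close>
lemma g_abc_M_ab:
  assumes ab: "\<alpha> \<ge> 1" "\<beta> \<ge> 1" and \<kappa>: "0 \<le> \<kappa>" "\<beta> * \<kappa> \<le> 1" and "\<alpha> < \<beta>"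
  shows "g_abc \<alpha> \<beta> c \<kappa> (M_ab \<alpha> \<beta> \<kappa>) = ln c * ((\<beta> * \<kappa> - M_ab \<alpha> \<beta> \<kappa>) / \<alpha>)"
proof -
  define M where "M = M_ab \<alpha> \<beta> \<kappa>"
  define \<iota> where "\<iota> = (\<beta> * \<kappa> - M) / \<alpha>"
  have "\<alpha> * \<kappa> < 1"
  proof (cases "\<kappa> = 0")
    case False
    with \<open>\<alpha> < \<beta>\<close> \<kappa> have "\<alpha> * \<kappa> < \<beta> * \<kappa>" by (intro mult_strict_right_mono) auto
    with \<kappa> show ?thesis by linarith
  qed simp
  then have \<iota>_eq: "\<iota> = (1 - M) * \<kappa>"
    using \<open>\<alpha> < \<beta>\<close> ab by (simp add: \<iota>_def M_def M_ab_def field_simps)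
  have M: "M_ab \<alpha> \<beta> \<kappa> \<le> M" "M \<le> \<beta> * \<kappa>" "0 \<le> M"
    using M_ab_le M_ab_nonneg ab \<kappa> by (auto simp: M_def)
  have "\<kappa> \<le> 1" using \<kappa> ab mult_right_mono[of 1 \<beta> \<kappa>] by simp
  have sp: "split_point \<kappa> M \<iota>"
    using split_point_on_line[OF ab \<kappa> M(1,2)] by (simp add: \<iota>_def)
  have line: "\<alpha> * \<iota> + M = \<beta> * \<kappa>" using ab by (simp add: \<iota>_def)
  have "\<kappa> - \<iota> = M * \<kappa>" by (simp add: \<iota>_eq algebra_simps)
  then have "ent M (\<kappa> - \<iota>) + ent (1 - M) \<iota> = ent 1 \<kappa>"
    using ent_scale[of M \<kappa> 1] ent_scale[of "1 - M" \<kappa> 1] M \<kappa> \<open>\<kappa> \<le> 1\<close>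
    by (simp add: \<iota>_eq algebra_simps)
  then show ?thesis
    using g_abc_on_line[OF ab(1) sp line] by (simp add: exposed_rate_def M_def \<iota>_def)
qed

lemma exposed_rate_on_line_le:
  assumes ab: "\<alpha> \<ge> 1" "\<beta> \<ge> 1" and c: "c \<ge> 1" and \<kappa>: "0 \<le> \<kappa>" "\<beta> * \<kappa> \<le> 1"
    and sp: "split_point \<kappa> \<tau> \<iota>" and line: "\<alpha> * \<iota> + \<tau> = \<beta> * \<kappa>"
  shows "exposed_rate c \<kappa> \<tau> \<iota> \<le> ent 1 \<kappa> - amls_inner \<alpha> \<beta> c \<kappa>"
proof (cases "M_ab \<alpha> \<beta> \<kappa> \<le> \<tau>")
  case True
  have "0 \<le> \<alpha> * \<iota>" using sp ab by (simp add: split_point_def)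
  then have "\<tau> \<le> \<beta> * \<kappa>" using line by linarith
  with True show ?thesis
    using g_abc_on_line[OF ab(1) sp line] amls_inner_le[OF ab c \<kappa>] by force
next
  case False
  then have "\<alpha> < \<beta>" using M_ab_le_on_line[OF ab(2) _ sp line] by force
  have "(\<beta> * \<kappa> - M_ab \<alpha> \<beta> \<kappa>) / \<alpha> \<le> \<iota>"
    using False line ab by (simp add: divide_le_eq algebra_simps)
  then have "ln c * ((\<beta> * \<kappa> - M_ab \<alpha> \<beta> \<kappa>) / \<alpha>) \<le> ln c * \<iota>"
    using c by (intro mult_left_mono) auto
  then have "amls_inner \<alpha> \<beta> c \<kappa> \<le> ln c * \<iota>"
    using amls_inner_le[OF ab c \<kappa> order_refl M_ab_le[OF ab \<kappa>]] g_abc_M_ab[OF ab \<kappa> \<open>\<alpha> < \<beta>\<close>] by simp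
  then show ?thesis using exposed_rate_le[OF sp, of c] by simp
qed

lemma split_point_convex:
  assumes "split_point \<kappa> \<tau>1 \<iota>1" "split_point \<kappa> \<tau>2 \<iota>2" "0 \<le> t" "t \<le> 1"
  shows "split_point \<kappa> ((1 - t) * \<tau>1 + t * \<tau>2) ((1 - t) * \<iota>1 + t * \<iota>2)"
proof -
  have comb: "0 \<le> (1 - t) * a1 + t * a2" if "0 \<le> a1" "0 \<le> a2" for a1 a2
    using assms(3,4) that by simp
  show ?thesis
    using comb[of \<iota>1 \<iota>2] comb[of "\<kappa> - \<iota>1" "\<kappa> - \<iota>2"] comb[of "\<tau>1 + \<iota>1 - \<kappa>" "\<tau>2 + \<iota>2 - \<kappa>"]
      comb[of "1 - \<tau>1 - \<iota>1" "1 - \<tau>2 - \<iota>2"] assms(1,2)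
    unfolding split_point_def by (simp add: algebra_simps)
qed

text \<open>Moving from \<open>(\<tau>, \<iota>)\<close> towards the split \<open>(1, 0)\<close>, where the exposed rate is maximal,
  until the line \<open>\<alpha> \<iota> + \<tau> = \<beta> \<kappa>\<close> is reached does not decrease the (concave) exposed rate.\<close>
lemma exposed_rate_le_amls_inner:
  assumes ab: "\<alpha> \<ge> 1" "\<beta> \<ge> 1" and c: "c \<ge> 1" and \<kappa>: "0 \<le> \<kappa>" "\<beta> * \<kappa> \<le> 1"
    and sp: "split_point \<kappa> \<tau> \<iota>" and below: "\<alpha> * \<iota> + \<tau> \<le> \<beta> * \<kappa>"
  shows "exposed_rate c \<kappa> \<tau> \<iota> \<le> ent 1 \<kappa> - amls_inner \<alpha> \<beta> c \<kappa>"
proof -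
  define h where "h = \<alpha> * \<iota> + \<tau>"
  define t where "t = (if h < 1 then (\<beta> * \<kappa> - h) / (1 - h) else 0)"
  have "h \<le> 1" using below \<kappa> by (simp add: h_def)
  then have t: "0 \<le> t" "t \<le> 1"
    using below \<kappa> by (auto simp: t_def h_def field_simps)
  have "\<kappa> \<le> 1" using \<kappa> ab mult_right_mono[of 1 \<beta> \<kappa>] by simp
  then have sp1: "split_point \<kappa> 1 0" using \<kappa> by (simp add: split_point_def)
  have sp': "split_point \<kappa> ((1 - t) * \<tau> + t * 1) ((1 - t) * \<iota> + t * 0)"
    using split_point_convex[OF sp sp1 t] .
  have line: "\<alpha> * ((1 - t) * \<iota> + t * 0) + ((1 - t) * \<tau> + t * 1) = \<beta> * \<kappa>"
  proof (cases "h < 1")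
    case True
    have "\<alpha> * ((1 - t) * \<iota> + t * 0) + ((1 - t) * \<tau> + t * 1) = h + t * (1 - h)"
      by (simp add: h_def algebra_simps)
    also have "\<dots> = \<beta> * \<kappa>" using True by (simp add: t_def)
    finally show ?thesis .
  next
    case False
    with \<open>h \<le> 1\<close> below \<kappa> show ?thesis by (simp add: t_def h_def)
  qed
  have "0 \<le> ln c * \<iota>" using sp c by (simp add: split_point_def)
  then have "exposed_rate c \<kappa> \<tau> \<iota> \<le> exposed_rate c \<kappa> 1 0"
    using exposed_rate_le[OF sp, of c] by (simp add: exposed_rate_def)
  then have "t * exposed_rate c \<kappa> \<tau> \<iota> \<le> t * exposed_rate c \<kappa> 1 0"
    using t by (intro mult_left_mono)
  then have "exposed_rate c \<kappa> \<tau> \<iota> \<le> (1 - t) * exposed_rate c \<kappa> \<tau> \<iota> + t * exposed_rate c \<kappa> 1 0"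
    by (simp add: algebra_simps)
  also have "\<dots> \<le> exposed_rate c \<kappa> ((1 - t) * \<tau> + t * 1) ((1 - t) * \<iota> + t * 0)"
    using exposed_rate_concave[OF sp sp1 t] .
  also have "\<dots> \<le> ent 1 \<kappa> - amls_inner \<alpha> \<beta> c \<kappa>"
    using exposed_rate_on_line_le[OF ab c \<kappa> sp' line] .
  finally show ?thesis .
qed

section \<open>From real to integer splits\<close>

lemma xlnx_diff_le:
  assumes "N \<ge> 1" "0 \<le> t" "t \<le> N" "0 \<le> t'" "t' \<le> N" "\<bar>t - t'\<bar> \<le> d"
  shows "xlnx t - xlnx t' \<le> (d + 1) * (ln N + 1)"
proof -
  have "0 \<le> d" "0 \<le> ln N" using assms by auto
  then have "1 \<le> (d + 1) * (ln N + 1)" by (simp add: algebra_simps)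
  show ?thesis
  proof (cases "t \<le> 1")
    case True
    then have "xlnx t \<le> 0"
      using assms by (cases "t = 0") (auto simp: xlnx_def intro!: mult_nonneg_nonpos)
    with xlnx_ge[of t'] assms \<open>1 \<le> (d + 1) * (ln N + 1)\<close> show ?thesis by linarith
  next
    case False
    have "xlnx t - xlnx t' \<le> (t - t') * (ln t + 1)"
      using gibbs_inequality[of t' t] False assms by (simp add: xlnx_def algebra_simps)
    also have "\<dots> \<le> d * (ln N + 1)"
      using False assms \<open>0 \<le> d\<close> by (intro mult_mono) auto
    finally show ?thesis using \<open>0 \<le> ln N\<close> by (simp add: algebra_simps)
  qed
qed

lemma ent_diff_le:
  assumes "N \<ge> 1" "0 \<le> r" "r \<le> m" "m \<le> N" "0 \<le> r'" "r' \<le> m'" "m' \<le> N"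
    and "\<bar>m - m'\<bar> \<le> d" "\<bar>r - r'\<bar> \<le> d" "\<bar>(m - r) - (m' - r')\<bar> \<le> d"
  shows "ent m r - ent m' r' \<le> 3 * (d + 1) * (ln N + 1)"
proof -
  have "xlnx m - xlnx m' \<le> (d + 1) * (ln N + 1)" "xlnx r' - xlnx r \<le> (d + 1) * (ln N + 1)"
    "xlnx (m' - r') - xlnx (m - r) \<le> (d + 1) * (ln N + 1)"
    using assms by (auto intro!: xlnx_diff_le simp: abs_minus_commute)
  then show ?thesis unfolding ent_def by linarith
qed

lemma exposed_rate_scaled_le:
  assumes ab: "\<alpha> \<ge> 1" "\<beta> \<ge> 1" and c: "c \<ge> 1" and n: "n > 0" and x: "0 \<le> x" "\<beta> * x \<le> n"
    and y: "0 \<le> y" "y \<le> x" "x - y \<le> \<sigma>" "y \<le> n - \<sigma>" "\<alpha> * y + \<sigma> \<le> \<beta> * x"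
  shows "ent \<sigma> (x - y) + ent (n - \<sigma>) y - ln c * y \<le> n * (ent 1 (x / n) - amls_inner \<alpha> \<beta> c (x / n))"
proof -
  have "x / n - y / n = (x - y) / n" "1 - \<sigma> / n = (n - \<sigma>) / n"
    using n by (simp_all add: diff_divide_distrib)
  then have sp: "split_point (x / n) (\<sigma> / n) (y / n)"
    using n y by (simp add: split_point_def divide_le_cancel)
  have "(\<alpha> * y + \<sigma>) / n \<le> (\<beta> * x) / n"
    using n y by (simp add: divide_right_mono)
  then have "\<alpha> * (y / n) + \<sigma> / n \<le> \<beta> * (x / n)"
    by (simp add: add_divide_distrib)
  moreover have "0 \<le> x / n" "\<beta> * (x / n) \<le> 1" using n x by (simp_all add: field_simps)
  ultimately have "exposed_rate c (x / n) (\<sigma> / n) (y / n) \<le> ent 1 (x / n) - amls_inner \<alpha> \<beta> c (x / n)"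
    using exposed_rate_le_amls_inner[OF ab c _ _ sp] by blast
  moreover have "n * exposed_rate c (x / n) (\<sigma> / n) (y / n) = ent \<sigma> (x - y) + ent (n - \<sigma>) y - ln c * y"
    using ent_scale[of n "x / n - y / n" "\<sigma> / n"] ent_scale[of n "y / n" "1 - \<sigma> / n"] n sp
    by (simp add: exposed_rate_def split_point_def right_diff_distrib algebra_simps)
  ultimately show ?thesis using n by (metis mult_left_mono less_imp_le)
qed

text \<open>Moving an integer split onto the region \<open>\<alpha> y + \<sigma> \<le> \<beta> k\<close> may require trading up to
  \<open>1 / (\<alpha> - 1)\<close> elements from outside to inside the query set.\<close>
definition rounding_gap :: "real \<Rightarrow> real" where
  "rounding_gap \<alpha> = 1 + (if \<alpha> > 1 then 1 / (\<alpha> - 1) else 0)"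

lemma exists_split_near_integer_split:
  fixes j k s n B :: nat and \<alpha> \<beta> :: real
  assumes ab: "\<alpha> \<ge> 1" "\<beta> \<ge> 1" and jks: "j \<le> k" "k \<le> j + s" "j + s \<le> n"
    and exposed: "\<alpha> * j + s < B" and B: "B \<le> \<beta> * k + 1"
  obtains \<sigma> y :: real
  where "0 \<le> y" "y \<le> j" "j - rounding_gap \<alpha> \<le> y" "s \<le> \<sigma>" "\<sigma> \<le> s + rounding_gap \<alpha>"
    "k - y \<le> \<sigma>" "y \<le> n - \<sigma>" "\<alpha> * y + \<sigma> \<le> \<beta> * k"
proof -
  have gap: "1 \<le> rounding_gap \<alpha>" by (simp add: rounding_gap_def)
  have "k \<le> \<beta> * k" using ab mult_right_mono[of 1 \<beta> "real k"] by simp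
  consider "\<alpha> * j + s \<le> \<beta> * k" | "\<beta> * k < \<alpha> * j + s" "k < j + s" | "\<beta> * k < \<alpha> * j + s" "k = j + s"
    using jks by linarith
  then show ?thesis
  proof cases
    case 1
    with jks gap show ?thesis by (intro that[where \<sigma> = "real s" and y = "real j"]) auto
  next
    case 2
    have "j \<ge> 1"
    proof (rule ccontr)
      assume "\<not> j \<ge> 1"
      then have "j = 0" by simp
      with exposed have "s < B" by simp
      then have "real s + 1 \<le> B" by (simp add: Suc_le_eq flip: of_nat_Suc)
      with 2 B \<open>j = 0\<close> show False by simp
    qed
    with 2 B exposed ab jks gap show ?thesis
      by (intro that[where \<sigma> = "real s" and y = "real j - 1"]) (auto simp: algebra_simps)
  next
    case 3
    with ab \<open>k \<le> \<beta> * k\<close> have "\<alpha> > 1" by (cases "\<alpha> = 1") auto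
    define t where "t = min (real j) (1 / (\<alpha> - 1))"
    have "(\<alpha> - 1) * (1 / (\<alpha> - 1)) = 1" using \<open>\<alpha> > 1\<close> by simp
    then have t: "0 \<le> t" "t \<le> j" "t \<le> rounding_gap \<alpha>" "(\<alpha> - 1) * t \<le> 1"
      using \<open>\<alpha> > 1\<close> mult_left_mono[of "real j" "1 / (\<alpha> - 1)" "\<alpha> - 1"]
      by (auto simp: t_def rounding_gap_def min_def)
    have "\<alpha> * (j - t) + (s + t) \<le> \<beta> * k"
    proof (cases "t = j")
      case True
      with 3 \<open>k \<le> \<beta> * k\<close> show ?thesis by simp
    next
      case False
      then have "(\<alpha> - 1) * t = 1" using \<open>\<alpha> > 1\<close> by (simp add: t_def min_def split: if_splits)
      with 3 exposed B show ?thesis by (simp add: algebra_simps)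
    qed
    with 3 t jks show ?thesis
      by (intro that[where \<sigma> = "real s + t" and y = "real j - t"]) auto
  qed
qed

lemma exposed_count_exponent_le:
  fixes j k s n B :: nat and \<alpha> \<beta> c \<kappa> :: real
  assumes ab: "\<alpha> \<ge> 1" "\<beta> \<ge> 1" and c: "c \<ge> 1" and \<kappa>: "0 \<le> \<kappa>" "\<beta> * \<kappa> \<le> 1"
    and n: "n \<ge> 1" and k: "k < \<kappa> * n" "\<kappa> * n \<le> k + 1"
    and jks: "j \<le> k" "k \<le> j + s" "j + s \<le> n"
    and exposed: "\<alpha> * j + s < B" and B: "B \<le> \<beta> * k + 1"
  shows "ent s (k - j) + ent (n - s) j - ln c * j
    \<le> n * (ent 1 \<kappa> - amls_inner \<alpha> \<beta> c \<kappa>) + 6 * (2 * rounding_gap \<alpha> + 3) * (ln n + 1)"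
proof -
  define d where "d = 2 * rounding_gap \<alpha> + 2"
  obtain \<sigma> y :: real where near: "0 \<le> y" "y \<le> j" "j - rounding_gap \<alpha> \<le> y" "s \<le> \<sigma>"
    "\<sigma> \<le> s + rounding_gap \<alpha>"
    and split: "k - y \<le> \<sigma>" "y \<le> n - \<sigma>" "\<alpha> * y + \<sigma> \<le> \<beta> * k"
    by (rule exists_split_near_integer_split[OF ab jks exposed B])
  define x where "x = \<kappa> * n"
  define \<sigma>' where "\<sigma>' = min (\<sigma> + (x - k)) (n - y)"
  have "\<kappa> \<le> 1" using ab \<kappa> mult_right_mono[of 1 \<beta> \<kappa>] by simp
  then have x: "0 \<le> x" "\<beta> * x \<le> n" "x \<le> n"
    using \<kappa> n mult_right_mono[of "\<beta> * \<kappa>" 1 n] mult_right_mono[of \<kappa> 1 n] by (simp_all add: x_def)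
  have "x - k \<le> \<beta> * (x - k)" using k ab mult_right_mono[of 1 \<beta> "x - k"] by (simp add: x_def)
  then have split': "0 \<le> y" "y \<le> x" "x - y \<le> \<sigma>'" "y \<le> n - \<sigma>'" "\<alpha> * y + \<sigma>' \<le> \<beta> * x"
    using near split k x jks by (auto simp: \<sigma>'_def x_def algebra_simps)
  have \<sigma>': "\<sigma> \<le> \<sigma>'" "\<sigma>' \<le> s + d - 1" "\<sigma>' \<le> n - y"
    using near split k by (auto simp: \<sigma>'_def d_def x_def)
  have "ent \<sigma>' (x - y) + ent (n - \<sigma>') y - ln c * y \<le> n * (ent 1 \<kappa> - amls_inner \<alpha> \<beta> c \<kappa>)"
    using exposed_rate_scaled_le[OF ab c _ x(1,2) split'] n by (simp add: x_def)
  moreover have "ent s (k - j) - ent \<sigma>' (x - y) \<le> 3 * (d + 1) * (ln n + 1)"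
  proof (rule ent_diff_le)
    show "\<bar>real s - \<sigma>'\<bar> \<le> d" "\<bar>real (k - j) - (x - y)\<bar> \<le> d"
      "\<bar>(s - real (k - j)) - (\<sigma>' - (x - y))\<bar> \<le> d"
      using near \<sigma>' k jks by (auto simp: abs_le_iff of_nat_diff d_def x_def)
  qed (use near split' \<sigma>' jks n x in \<open>auto simp: of_nat_diff\<close>)
  moreover have "ent (n - s) j - ent (n - \<sigma>') y \<le> 3 * (d + 1) * (ln n + 1)"
  proof (rule ent_diff_le)
    show "\<bar>real (n - s) - (n - \<sigma>')\<bar> \<le> d" "\<bar>real j - y\<bar> \<le> d"
      "\<bar>(real (n - s) - j) - ((n - \<sigma>') - y)\<bar> \<le> d"
      using near \<sigma>' jks by (auto simp: abs_le_iff of_nat_diff d_def)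
  qed (use near split' \<sigma>' jks n x in \<open>auto simp: of_nat_diff\<close>)
  moreover have "ln c * y \<le> ln c * j" using near c by (simp add: mult_left_mono)
  ultimately show ?thesis by (simp add: d_def algebra_simps)
qed

section \<open>Hard instances\<close>

text \<open>The hard instances sketched above, with \<open>B = nat \<lfloor>\<beta> * k\<rfloor> + 1\<close>: \<open>hidden_oracle\<close> pads \<open>S\<close> to
  size \<open>B\<close> unless the padding is not an \<open>\<alpha>\<close>-approximate answer, which is what \<open>exposes\<close> says.\<close>
definition hidden_family :: "nat set \<Rightarrow> nat \<Rightarrow> nat set \<Rightarrow> nat set set" where
  "hidden_family U B T = {S. S \<subseteq> U \<and> (T \<subseteq> S \<or> B \<le> card S)}"

definition exposes :: "real \<Rightarrow> nat \<Rightarrow> nat set \<Rightarrow> nat \<Rightarrow> nat set \<Rightarrow> bool" where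
  "exposes \<alpha> B S l T \<longleftrightarrow> card (T - S) \<le> l \<and> \<alpha> * card (T - S) < real B - card S"

definition padding :: "nat set \<Rightarrow> nat \<Rightarrow> nat set \<Rightarrow> nat set" where
  "padding U B S = (SOME D. D \<subseteq> U - S \<and> card D = B - card S)"

definition hidden_oracle :: "nat set \<Rightarrow> nat \<Rightarrow> real \<Rightarrow> nat set \<Rightarrow> nat set \<Rightarrow> nat \<Rightarrow> nat set" where
  "hidden_oracle U B \<alpha> T S l = (if S \<subseteq> U \<and> exposes \<alpha> B S l T then T - S else padding U B S)"

lemma padding:
  assumes "finite U" "S \<subseteq> U" "B \<le> card U"
  shows "padding U B S \<subseteq> U - S" "card (padding U B S) = B - card S"
proof -
  have "B - card S \<le> card (U - S)"
    using assms by (simp add: card_Diff_subset finite_subset)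
  then obtain D where "D \<subseteq> U - S" "card D = B - card S"
    by (metis obtain_subset_with_card_n)
  then have "\<exists>D. D \<subseteq> U - S \<and> card D = B - card S" by blast
  from someI_ex[OF this] show "padding U B S \<subseteq> U - S" "card (padding U B S) = B - card S"
    unfolding padding_def by auto
qed

lemma wt_unit: "wt (\<lambda>_. 1) S = card S"
  by (simp add: wt_def)

lemma monotone_hidden_family:
  assumes "finite U" "T \<subseteq> U"
  shows "monotone_sys U (hidden_family U B T)"
  unfolding monotone_sys_def hidden_family_def
  using assms by (auto dest: card_mono[OF finite_subset[OF _ \<open>finite U\<close>]])

lemma opt_hidden_family:
  assumes "finite U" "T \<subseteq> U" "card T < B"
  shows "opt U (\<lambda>_. 1) (hidden_family U B T) = card T"
  unfolding opt_def
proof (rule Min_eqI)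
  show "finite (wt (\<lambda>_. 1) ` hidden_family U B T)"
    using assms by (simp add: hidden_family_def)
  have "card T \<le> card S" if "S \<in> hidden_family U B T" for S
    using that assms by (auto simp: hidden_family_def intro: card_mono finite_subset)
  then show "real (card T) \<le> y" if "y \<in> wt (\<lambda>_. 1) ` hidden_family U B T" for y
    using that by (auto simp only: wt_unit of_nat_le_iff)
  show "real (card T) \<in> wt (\<lambda>_. 1) ` hidden_family U B T"
    using assms unfolding wt_unit by (auto simp: hidden_family_def)
qed

lemma card_hidden_oracle_le:
  fixes \<alpha> :: real
  assumes U: "finite U" "B \<le> card U" and \<alpha>: "\<alpha> \<ge> 1" and S: "S \<subseteq> U"
    and X: "X \<subseteq> U" "card X \<le> l" "X \<union> S \<in> hidden_family U B T"
  shows "real (card (hidden_oracle U B \<alpha> T S l)) \<le> \<alpha> * card X"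
proof -
  have fin: "finite X" "finite S" using U X S by (auto intro: finite_subset)
  have X_le: "real (card X) \<le> \<alpha> * card X" using \<alpha> by (simp add: mult_le_cancel_right1)
  have "card (X \<union> S) \<le> card X + card S" by (rule card_Un_le)
  with X have feasible: "T - S \<subseteq> X \<or> B \<le> card X + card S"
    by (auto simp: hidden_family_def)
  show ?thesis
  proof (cases "exposes \<alpha> B S l T")
    case True
    from feasible have "real (card (T - S)) \<le> \<alpha> * card X"
    proof
      assume "T - S \<subseteq> X"
      then have "card (T - S) \<le> card X" using fin by (simp add: card_mono)
      then have "real (card (T - S)) \<le> card X" by simp
      with X_le show ?thesis by linarith
    next
      assume "B \<le> card X + card S"
      then have "real B \<le> card X + card S" by (simp flip: of_nat_add)
      moreover have "real (card (T - S)) \<le> \<alpha> * card (T - S)" using \<alpha> by (simp add: mult_le_cancel_right1)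
      ultimately show ?thesis using True X_le unfolding exposes_def by linarith
    qed
    with True S show ?thesis by (simp add: hidden_oracle_def)
  next
    case False
    from feasible have "real (B - card S) \<le> \<alpha> * card X"
    proof
      assume "T - S \<subseteq> X"
      then have "card (T - S) \<le> card X" using fin by (simp add: card_mono)
      moreover from this False X have "real B - card S \<le> \<alpha> * card (T - S)" by (simp add: exposes_def)
      moreover have "\<alpha> * card (T - S) \<le> \<alpha> * card X" using calculation(1) \<alpha> by simp
      moreover have "0 \<le> \<alpha> * card X" using \<alpha> by simp
      ultimately show ?thesis by (cases "card S \<le> B") (auto simp: of_nat_diff)
    next
      assume "B \<le> card X + card S"
      with X_le show ?thesis by simp
    qed
    with False S U show ?thesis by (simp add: hidden_oracle_def padding)
  qed
qed

lemma ext_oracle_hidden_oracle: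
  assumes U: "finite U" "T \<subseteq> U" "B \<le> card U" and \<alpha>: "\<alpha> \<ge> 1"
  shows "ext_oracle \<alpha> U (\<lambda>_. 1) (hidden_family U B T) (hidden_oracle U B \<alpha> T)"
  unfolding ext_oracle_def
proof (intro allI impI conjI)
  fix S l assume S: "S \<subseteq> U"
  note pad = padding[OF U(1) S U(3)]
  show "hidden_oracle U B \<alpha> T S l \<subseteq> U"
    using pad U by (auto simp: hidden_oracle_def)
  have "B \<le> card (padding U B S \<union> S)"
    using pad U S by (subst card_Un_disjoint) (auto intro: finite_subset)
  then show "hidden_oracle U B \<alpha> T S l \<union> S \<in> hidden_family U B T"
    using pad U S by (auto simp: hidden_oracle_def hidden_family_def)
  fix X assume "X \<subseteq> U \<and> card X \<le> l \<and> X \<union> S \<in> hidden_family U B T"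
  then show "wt (\<lambda>_. 1) (hidden_oracle U B \<alpha> T S l) \<le> \<alpha> * wt (\<lambda>_. 1) X"
    unfolding wt_unit using card_hidden_oracle_le[OF U(1,3) \<alpha> S] by blast
qed

section \<open>The adversary argument\<close>

lemma run_time_nonneg: "c \<ge> 0 \<Longrightarrow> run_time c t orc \<ge> 0"
  by (induction t) auto

text \<open>An adversary answers every query \<open>(S, l)\<close> with \<open>dflt S l\<close> while this is consistent with at
  least one candidate; each query of cost \<open>c ^ l\<close> rules out at most \<open>R * (1 + c ^ l)\<close> candidates, and
  at the end the output, a set of size at most \<open>m\<close>, contains at most \<open>m choose k\<close> of them.\<close>
lemma decision_tree_adversary:
  fixes orc :: "nat set \<Rightarrow> nat set \<Rightarrow> nat \<Rightarrow> nat set" and c R :: real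
  assumes c: "c \<ge> 0" and R: "R \<ge> 0"
    and "finite Cand" "Cand \<noteq> {}" "\<And>T. T \<in> Cand \<Longrightarrow> card T = k"
    and few_exceptions: "\<And>S l. card {T\<in>Cand. orc T S l \<noteq> dflt S l} \<le> R * (1 + c ^ l)"
    and solves: "\<And>T. T \<in> Cand \<Longrightarrow>
      T \<subseteq> run_out t (orc T) \<and> finite (run_out t (orc T)) \<and> card (run_out t (orc T)) \<le> m"
  shows "\<exists>T\<in>Cand. card Cand \<le> R * run_time c t (orc T) + (m choose k)"
  using assms(3-5) few_exceptions solves
proof (induction t arbitrary: Cand)
  case (Output T0)
  obtain T1 where "T1 \<in> Cand" using Output.prems(2) by blast
  then have "finite T0" "card T0 \<le> m" using Output.prems(5) by auto
  moreover have "T \<subseteq> T0" "card T = k" if "T \<in> Cand" for T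
    using Output.prems(3,5)[OF that] by auto
  then have "Cand \<subseteq> {X. X \<subseteq> T0 \<and> card X = k}" by blast
  ultimately have "card Cand \<le> card T0 choose k"
    using card_mono[of "{X. X \<subseteq> T0 \<and> card X = k}" Cand] by (simp add: n_subsets)
  also have "\<dots> \<le> m choose k" using \<open>card T0 \<le> m\<close> by (rule binomial_right_mono)
  finally show ?case using \<open>T1 \<in> Cand\<close> by auto
next
  case (Query S l cont)
  define C1 where "C1 = {T\<in>Cand. orc T S l = dflt S l}"
  have split: "card Cand = card C1 + card {T\<in>Cand. orc T S l \<noteq> dflt S l}"
    using Query.prems(1) unfolding C1_def by (subst card_Un_disjoint[symmetric]) (auto intro: arg_cong[where f = card])
  have step: "run_time c (Query S l cont) (orc T) = 1 + c ^ l + run_time c (cont (dflt S l)) (orc T)"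
    if "T \<in> C1" for T
    using that by (simp add: C1_def)
  show ?case
  proof (cases "C1 = {}")
    case True
    obtain T where "T \<in> Cand" using Query.prems(2) by blast
    moreover have "R * (1 + c ^ l) \<le> R * run_time c (Query S l cont) (orc T)"
      using c R run_time_nonneg[of c] by (intro mult_left_mono) auto
    ultimately show ?thesis using split True Query.prems(4)[of S l] by (intro bexI[of _ T]) auto
  next
    case False
    have "\<exists>T\<in>C1. card C1 \<le> R * run_time c (cont (dflt S l)) (orc T) + (m choose k)"
    proof (rule Query.IH[OF rangeI])
      show "card {T\<in>C1. orc T S' l' \<noteq> dflt S' l'} \<le> R * (1 + c ^ l')" for S' l'
        using Query.prems(1) Query.prems(4)[of S' l'] card_mono[of "{T\<in>Cand. orc T S' l' \<noteq> dflt S' l'}" "{T\<in>C1. orc T S' l' \<noteq> dflt S' l'}"]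
        by (force simp: C1_def)
      show "T \<subseteq> run_out (cont (dflt S l)) (orc T) \<and> finite (run_out (cont (dflt S l)) (orc T))
          \<and> card (run_out (cont (dflt S l)) (orc T)) \<le> m" if "T \<in> C1" for T
        using that Query.prems(5)[of T] by (simp add: C1_def)
    qed (use False Query.prems(1,3) in \<open>auto simp: C1_def\<close>)
    then obtain T where "T \<in> C1" "card C1 \<le> R * run_time c (cont (dflt S l)) (orc T) + (m choose k)" ..
    with step[of T] split Query.prems(4)[of S l] show ?thesis
      by (intro bexI[of _ T]) (auto simp: C1_def algebra_simps)
  qed
qed

lemma card_subsets_by_intersection:
  assumes "finite U" "S \<subseteq> U"
  shows "card {T. T \<subseteq> U \<and> card T = k \<and> card (T - S) = j} \<le> (card S choose (k - j)) * ((card U - card S) choose j)"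
proof -
  define P where "P = {X. X \<subseteq> S \<and> card X = k - j} \<times> {Y. Y \<subseteq> U - S \<and> card Y = j}"
  have "finite S" using assms finite_subset by blast
  have "inj_on (\<lambda>T. (T \<inter> S, T - S)) {T. T \<subseteq> U \<and> card T = k \<and> card (T - S) = j}"
    by (rule inj_onI) blast
  moreover have "(\<lambda>T. (T \<inter> S, T - S)) ` {T. T \<subseteq> U \<and> card T = k \<and> card (T - S) = j} \<subseteq> P"
  proof (rule image_subsetI)
    fix T assume "T \<in> {T. T \<subseteq> U \<and> card T = k \<and> card (T - S) = j}"
    then have T: "T \<subseteq> U" "card T = k" "card (T - S) = j" by auto
    then have "card T = card (T \<inter> S) + card (T - S)"
      using \<open>finite U\<close> by (metis Int_Diff_Un Int_Diff_disjoint card_Un_disjoint finite_Diff finite_Int finite_subset)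
    with T show "(T \<inter> S, T - S) \<in> P" by (auto simp: P_def)
  qed
  moreover have "finite P" using assms \<open>finite S\<close> by (simp add: P_def)
  ultimately have "card {T. T \<subseteq> U \<and> card T = k \<and> card (T - S) = j} \<le> card P"
    by (rule card_inj_on_le)
  also have "card P = (card S choose (k - j)) * ((card U - card S) choose j)"
    using assms \<open>finite S\<close> by (simp add: P_def card_cartesian_product n_subsets card_Diff_subset)
  finally show ?thesis .
qed

lemma card_exposed_le:
  fixes \<alpha> c E :: real
  assumes U: "finite U" "S \<subseteq> U" and c: "c \<ge> 1" and E: "E \<ge> 0"
    and bound: "\<And>j. j \<le> k \<Longrightarrow> k \<le> j + card S \<Longrightarrow> j + card S \<le> card U \<Longrightarrow> \<alpha> * j + card S < B \<Longrightarrow>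
      real (card S choose (k - j)) * real ((card U - card S) choose j) \<le> c ^ j * E"
  shows "card {T. T \<subseteq> U \<and> card T = k \<and> exposes \<alpha> B S l T} \<le> (real k + 1) * E * c ^ l"
proof -
  define J where "J = {j. j \<le> k \<and> j \<le> l \<and> \<alpha> * j + card S < B}"
  define A where "A j = {T. T \<subseteq> U \<and> card T = k \<and> card (T - S) = j}" for j
  have "J \<subseteq> {..k}" by (auto simp: J_def)
  then have J: "finite J" "card J \<le> k + 1"
    using finite_subset card_mono[OF finite_atMost] by fastforce+
  have "{T. T \<subseteq> U \<and> card T = k \<and> exposes \<alpha> B S l T} \<subseteq> (\<Union>j\<in>J. A j)"
  proof
    fix T assume T: "T \<in> {T. T \<subseteq> U \<and> card T = k \<and> exposes \<alpha> B S l T}"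
    then have "T \<subseteq> U" by simp
    then have "finite T" using U(1) by (rule finite_subset)
    then have "card (T - S) \<le> card T" by (simp add: card_mono)
    with T have "card (T - S) \<in> J" by (simp add: J_def exposes_def)
    with T show "T \<in> (\<Union>j\<in>J. A j)" by (auto simp: A_def)
  qed
  moreover have "finite (A j)" for j
    using U by (auto simp: A_def intro: finite_subset[of _ "Pow U"])
  ultimately have "card {T. T \<subseteq> U \<and> card T = k \<and> exposes \<alpha> B S l T} \<le> card (\<Union>j\<in>J. A j)"
    using J(1) by (intro card_mono) auto
  also have "\<dots> \<le> (\<Sum>j\<in>J. card (A j))"
    using J(1) by (rule card_UN_le)
  also have "real \<dots> \<le> (\<Sum>j\<in>J. E * c ^ l)"
    unfolding of_nat_sum
  proof (rule sum_mono)
    fix j assume "j \<in> J"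
    then have j: "j \<le> k" "j \<le> l" "\<alpha> * j + card S < B" by (auto simp: J_def)
    have "card (A j) \<le> (card S choose (k - j)) * ((card U - card S) choose j)"
      unfolding A_def using U by (rule card_subsets_by_intersection)
    also have "real \<dots> \<le> c ^ j * E"
    proof (cases "k \<le> j + card S \<and> j + card S \<le> card U")
      case False
      with j card_mono[OF U] have "card S < k - j \<or> card U - card S < j" by auto
      then show ?thesis using c E by (auto simp: binomial_eq_0)
    qed (use bound j in simp)
    also have "\<dots> \<le> c ^ l * E" using c E j by (intro mult_right_mono power_increasing) auto
    finally show "real (card (A j)) \<le> E * c ^ l" by (simp add: mult.commute)
  qed
  also have "\<dots> \<le> (real k + 1) * E * c ^ l"
    using J E c by (simp add: mult.assoc mult_right_mono)
  finally show ?thesis by simp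
qed

section \<open>Lower bound for approximation algorithms\<close>

lemma binomial_le_mult_of_le_add_binomial_pred:
  fixes n k :: nat and X :: real
  assumes "1 \<le> k" "k \<le> n" "real (n choose k) \<le> X + real ((n - 1) choose k)"
  shows "real (n choose k) \<le> n * X"
proof -
  have "(n - k) * (n choose k) = n * ((n - 1) choose k)" by (rule binomial_absorb_comp)
  then have "n * real ((n - 1) choose k) = (real n - k) * real (n choose k)"
    using assms(2) by (metis of_nat_diff of_nat_mult)
  moreover have "n * real (n choose k) \<le> n * X + n * real ((n - 1) choose k)"
    using mult_left_mono[OF assms(3), of "real n"] by (simp add: algebra_simps)
  ultimately have "k * real (n choose k) \<le> n * X" by (simp add: algebra_simps)
  moreover have "real (n choose k) \<le> k * real (n choose k)"
    using assms(1) by (simp add: mult_le_cancel_right1)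
  ultimately show ?thesis by linarith
qed

lemma less_nat_floor_mult_plus_1:
  fixes k :: nat and \<beta> :: real
  assumes "\<beta> \<ge> 1"
  shows "k < nat \<lfloor>\<beta> * k\<rfloor> + 1"
proof -
  have "k \<le> \<beta> * k" using assms by (simp add: mult_le_cancel_right1)
  then have "int k \<le> \<lfloor>\<beta> * k\<rfloor>" by (simp add: le_floor_iff)
  then show ?thesis by linarith
qed

lemma approx_output_contains_hidden:
  assumes apx: "is_approx \<alpha> \<beta> A" and ab: "\<alpha> \<ge> 1" "\<beta> \<ge> 1"
    and U: "finite U" "T \<subseteq> U" and B: "B = nat \<lfloor>\<beta> * card T\<rfloor> + 1" "B \<le> card U"
  defines "out \<equiv> run_out (A U (\<lambda>_. 1)) (hidden_oracle U B \<alpha> T)"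
  shows "T \<subseteq> out" "finite out" "card out \<le> B - 1"
proof -
  have "card T < B" using less_nat_floor_mult_plus_1[OF ab(2)] B(1) by simp
  note inst = monotone_hidden_family[OF U, of B] ext_oracle_hidden_oracle[OF U B(2) ab(1)]
    opt_hidden_family[OF U \<open>card T < B\<close>]
  then have "out \<in> hidden_family U B T \<and> wt (\<lambda>_. 1) out \<le> \<beta> * opt U (\<lambda>_. 1) (hidden_family U B T)"
    using apx U unfolding is_approx_def out_def by blast
  then have out: "out \<in> hidden_family U B T" "card out \<le> \<beta> * card T"
    using inst(3) unfolding wt_unit by simp_all
  then show "finite out" using U by (auto simp: hidden_family_def intro: finite_subset)
  from out(2) have "int (card out) \<le> \<lfloor>\<beta> * card T\<rfloor>" by (simp add: le_floor_iff)
  then show "card out \<le> B - 1" using B(1) by linarith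
  with out \<open>card T < B\<close> show "T \<subseteq> out" by (auto simp: hidden_family_def)
qed

lemma hidden_instance_run_time:
  fixes A :: "nat set \<Rightarrow> (nat \<Rightarrow> nat) \<Rightarrow> alg" and \<alpha> \<beta> c R :: real and n k B :: nat
  assumes apx: "is_approx \<alpha> \<beta> A" and ab: "\<alpha> \<ge> 1" "\<beta> \<ge> 1" and c: "c \<ge> 1" and R: "R \<ge> 0"
    and k: "1 \<le> k" and B: "B = nat \<lfloor>\<beta> * k\<rfloor> + 1" "B \<le> n"
    and exposed: "\<And>S l. S \<subseteq> {..<n} \<Longrightarrow>
      card {T. T \<subseteq> {..<n} \<and> card T = k \<and> exposes \<alpha> B S l T} \<le> R * (1 + c ^ l)"
  shows "\<exists>T. T \<subseteq> {..<n} \<and> card T = k \<and>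
    n choose k \<le> n * R * run_time c (A {..<n} (\<lambda>_. 1)) (hidden_oracle {..<n} B \<alpha> T)"
proof -
  define U where "U = {..<n}"
  define Cand where "Cand = {T. T \<subseteq> U \<and> card T = k}"
  have "k < B" "k \<le> n" using less_nat_floor_mult_plus_1[OF ab(2), of k] B by simp_all
  have card_Cand: "card Cand = n choose k" by (simp add: Cand_def U_def n_subsets)
  have nonempty: "Cand \<noteq> {}" using card_Cand \<open>k \<le> n\<close> by (metis card.empty binomial_eq_0_iff not_less)
  have finite: "finite Cand" by (simp add: Cand_def U_def)
  have card: "card T = k" if "T \<in> Cand" for T using that by (simp add: Cand_def)
  have exceptions: "{T\<in>Cand. hidden_oracle U B \<alpha> T S l \<noteq> padding U B S} \<subseteq>
      (if S \<subseteq> U then {T. T \<subseteq> U \<and> card T = k \<and> exposes \<alpha> B S l T} else {})" for S l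
    by (auto simp: Cand_def hidden_oracle_def)
  have few: "card {T\<in>Cand. hidden_oracle U B \<alpha> T S l \<noteq> padding U B S} \<le> R * (1 + c ^ l)" for S l
    using exposed[of S l] R c card_mono[OF _ exceptions[of S l]]
    by (cases "S \<subseteq> U") (auto simp: U_def intro: order_trans[OF of_nat_mono] mult_nonneg_nonneg)
  have solves: "T \<subseteq> run_out (A U (\<lambda>_. 1)) (hidden_oracle U B \<alpha> T) \<and> finite (run_out (A U (\<lambda>_. 1)) (hidden_oracle U B \<alpha> T))
      \<and> card (run_out (A U (\<lambda>_. 1)) (hidden_oracle U B \<alpha> T)) \<le> B - 1" if "T \<in> Cand" for T
    using approx_output_contains_hidden[OF apx ab, of U T B] that B by (simp add: Cand_def U_def)
  obtain T where "T \<in> Cand"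
    "card Cand \<le> R * run_time c (A U (\<lambda>_. 1)) (hidden_oracle U B \<alpha> T) + ((B - 1) choose k)"
    using decision_tree_adversary[of c R Cand k "\<lambda>T. hidden_oracle U B \<alpha> T" "\<lambda>S l. padding U B S",
      OF _ R finite nonempty card few solves] c by auto
  moreover have "real ((B - 1) choose k) \<le> (n - 1) choose k" using B by (simp add: binomial_right_mono)
  ultimately have "n choose k \<le> R * run_time c (A U (\<lambda>_. 1)) (hidden_oracle U B \<alpha> T) + ((n - 1) choose k)"
    using card_Cand by linarith
  then show ?thesis
    using binomial_le_mult_of_le_add_binomial_pred[OF k \<open>k \<le> n\<close>] \<open>T \<in> Cand\<close>
    by (auto simp: Cand_def U_def mult.assoc)
qed

lemma run_time_hidden_le:
  assumes bound: "\<forall>U w F orc. finite U \<and> monotone_sys U F \<and> ext_oracle \<alpha> U w F orc \<and> card U \<ge> N \<longrightarrow>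
      run_time c (A U w) orc \<le> C * real (card U) ^ d * b ^ card U"
    and "\<alpha> \<ge> 1" "N \<le> n" "B \<le> n" "T \<subseteq> {..<n}" "card T < B"
  shows "run_time c (A {..<n} (\<lambda>_. 1)) (hidden_oracle {..<n} B \<alpha> T) \<le> C * real n ^ d * b ^ n"
  using bound[rule_format, where U = "{..<n}" and w = "\<lambda>_. 1" and F = "hidden_family {..<n} B T"
      and orc = "hidden_oracle {..<n} B \<alpha> T"]
    monotone_hidden_family[of "{..<n}" T B] ext_oracle_hidden_oracle[of "{..<n}" T B \<alpha>] assms(2-)
  by simp

lemma exists_nonpos_mult_power:
  fixes b C :: real
  assumes "b \<le> 0"
  shows "\<exists>n\<ge>N. C * real n ^ d * b ^ n \<le> 0"
proof (cases "C \<ge> 0")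
  case True
  have "b ^ Suc (2 * N) \<le> 0"
    using assms mult_nonpos_nonneg[of b "(b ^ 2) ^ N"] by (simp add: power_mult)
  with True show ?thesis by (intro exI[of _ "Suc (2 * N)"]) (simp add: mult_nonneg_nonpos)
next
  case False
  have "b ^ (2 * N) \<ge> 0" by (simp add: power_mult)
  with False show ?thesis by (intro exI[of _ "2 * N"]) (simp add: mult_nonpos_nonneg)
qed

text \<open>An algorithm always needs positive time on hidden instances with \<open>k = 1\<close>, so its running time
  cannot be bounded by \<open>C * n ^ d * b ^ n\<close> with \<open>b \<le> 0\<close>, which is non-positive for infinitely many \<open>n\<close>.\<close>
lemma no_approx_nonpos_base:
  assumes apx: "is_approx \<alpha> \<beta> A" and ab: "\<alpha> \<ge> 1" "\<beta> \<ge> 1" and c: "c \<ge> 1"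
    and time: "runs_in_time_poly_exp \<alpha> c A b" and b: "b \<le> 0"
  shows False
proof -
  obtain C d N where bound: "\<forall>U w F orc. finite U \<and> monotone_sys U F \<and> ext_oracle \<alpha> U w F orc \<and> card U \<ge> N \<longrightarrow>
      run_time c (A U w) orc \<le> C * real (card U) ^ d * b ^ card U"
    using time unfolding runs_in_time_poly_exp_def by blast
  define B where "B = nat \<lfloor>\<beta> * real (1::nat)\<rfloor> + 1"
  obtain n where n: "n \<ge> N + B + 1" "C * real n ^ d * b ^ n \<le> 0"
    using exists_nonpos_mult_power[OF b, of "N + B + 1" C d] by blast
  have "card {T. T \<subseteq> {..<n} \<and> card T = 1 \<and> exposes \<alpha> B S l T} \<le> card {T. T \<subseteq> {..<n} \<and> card T = 1}" for S l
    by (intro card_mono) auto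
  then have "real (card {T. T \<subseteq> {..<n} \<and> card T = 1 \<and> exposes \<alpha> B S l T}) \<le> real n" for S l
    by (simp add: n_subsets)
  moreover have "real n \<le> real n * (1 + c ^ l)" for l
    using c mult_left_mono[of 1 "1 + c ^ l" "real n"] by simp
  ultimately have "card {T. T \<subseteq> {..<n} \<and> card T = 1 \<and> exposes \<alpha> B S l T} \<le> real n * (1 + c ^ l)" for S l
    by (meson order_trans)
  then obtain T where T: "T \<subseteq> {..<n}" "card T = 1"
    "n choose 1 \<le> n * n * run_time c (A {..<n} (\<lambda>_. 1)) (hidden_oracle {..<n} B \<alpha> T)"
    using hidden_instance_run_time[OF apx ab c _ _ B_def, of n n] n by auto
  have "int 1 \<le> \<lfloor>\<beta>\<rfloor>" using ab by (simp add: le_floor_iff)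
  then have "card T < B" using T B_def by simp
  then have "run_time c (A {..<n} (\<lambda>_. 1)) (hidden_oracle {..<n} B \<alpha> T) \<le> 0"
    using run_time_hidden_le[OF bound ab(1), of n B T] n T by simp
  then have "real n * real n * run_time c (A {..<n} (\<lambda>_. 1)) (hidden_oracle {..<n} B \<alpha> T) \<le> 0"
    by (simp add: mult_nonneg_nonpos)
  moreover have "real n \<le> real n * real n * run_time c (A {..<n} (\<lambda>_. 1)) (hidden_oracle {..<n} B \<alpha> T)"
    using T(3) by (simp only: choose_one of_nat_mult)
  ultimately show False using n(1) by linarith
qed

lemma exists_kappa_below_amls:
  assumes ab: "\<alpha> \<ge> 1" "\<beta> \<ge> 1" and c: "c \<ge> 1" and b: "0 < b" "b < amls \<alpha> c \<beta>"
  obtains \<kappa> where "0 < \<kappa>" "\<beta> * \<kappa> \<le> 1" "ln b < amls_inner \<alpha> \<beta> c \<kappa>"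
proof (cases "ln b < 0")
  case True
  have "0 \<le> amls_inner \<alpha> \<beta> c (1 / \<beta>)" using ab c by (intro amls_inner_nonneg) auto
  with True ab show ?thesis by (intro that[of "1 / \<beta>"]) auto
next
  case False
  have range: "\<beta> * \<kappa> \<le> 1 \<longleftrightarrow> \<kappa> \<le> 1 / \<beta>" for \<kappa> using ab by (simp add: field_simps)
  have "ln b < ln (amls \<alpha> c \<beta>)" using b by simp
  then have "ln b < (SUP \<kappa>\<in>{0..1 / \<beta>}. amls_inner \<alpha> \<beta> c \<kappa>)"
    unfolding amls_eq_exp_SUP_amls_inner by simp
  moreover have "bdd_above (amls_inner \<alpha> \<beta> c ` {0..1 / \<beta>})"
    using amls_inner_le_1[OF ab c] range by (intro bdd_aboveI[where M = 1]) auto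
  moreover have "{0..1 / \<beta>} \<noteq> {}" using ab by simp
  ultimately obtain \<kappa> where \<kappa>: "0 \<le> \<kappa>" "\<kappa> \<le> 1 / \<beta>" "ln b < amls_inner \<alpha> \<beta> c \<kappa>"
    by (auto simp: less_cSUP_iff)
  moreover have "\<kappa> \<noteq> 0" using \<kappa> False amls_inner_0_le[OF ab c] by auto
  ultimately show ?thesis using range by (intro that[of \<kappa>]) auto
qed

lemma exp_ent_1_le_binomial:
  fixes n k :: nat and \<kappa> :: real
  assumes "0 \<le> \<kappa>" "\<kappa> \<le> 1" "n \<ge> 1" "k \<le> n" "\<bar>\<kappa> * n - k\<bar> \<le> 1"
  shows "exp (n * ent 1 \<kappa> - 6 * (ln n + 1)) \<le> (n + 1) * real (n choose k)"
proof -
  have "ent n (\<kappa> * n) = n * ent 1 \<kappa>"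
    using ent_scale[of n \<kappa> 1] assms by (simp add: mult.commute)
  moreover have "ent n (\<kappa> * n) - ent n k \<le> 3 * (1 + 1) * (ln n + 1)"
    using assms mult_left_le_one_le[of n \<kappa>] by (intro ent_diff_le) (auto simp: abs_minus_commute)
  ultimately have "exp (n * ent 1 \<kappa> - 6 * (ln n + 1)) \<le> exp (ent n k)" by simp
  also have "\<dots> \<le> (n + 1) * real (n choose k)" using exp_ent_le_binomial[OF assms(4)] by simp
  finally show ?thesis .
qed

lemma card_exposed_hidden_le:
  fixes n k B :: nat and \<alpha> \<beta> c \<kappa> E :: real
  assumes ab: "\<alpha> \<ge> 1" "\<beta> \<ge> 1" and c: "c \<ge> 1" and \<kappa>: "0 \<le> \<kappa>" "\<beta> * \<kappa> \<le> 1"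
    and n: "n \<ge> 1" and k: "k < \<kappa> * n" "\<kappa> * n \<le> k + 1" and B: "B = nat \<lfloor>\<beta> * k\<rfloor> + 1"
    and S: "S \<subseteq> {..<n}"
  defines "E \<equiv> exp (n * (ent 1 \<kappa> - amls_inner \<alpha> \<beta> c \<kappa>) + 6 * (2 * rounding_gap \<alpha> + 3) * (ln n + 1))"
  shows "card {T. T \<subseteq> {..<n} \<and> card T = k \<and> exposes \<alpha> B S l T} \<le> (n + 1) * E * (1 + c ^ l)"
proof -
  have "B \<le> \<beta> * k + 1" using B ab by simp
  have per_size: "real (card S choose (k - j)) * real ((n - card S) choose j) \<le> c ^ j * E"
    if "j \<le> k" "k \<le> j + card S" "j + card S \<le> n" "\<alpha> * j + card S < B" for j
  proof -
    have "real (card S choose (k - j)) * real ((n - card S) choose j)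
        \<le> exp (ent (card S) (k - j)) * exp (ent (n - card S) j)"
      using that by (intro mult_mono binomial_le_exp_ent) auto
    also have "\<dots> \<le> exp (ln c * j + (n * (ent 1 \<kappa> - amls_inner \<alpha> \<beta> c \<kappa>) + 6 * (2 * rounding_gap \<alpha> + 3) * (ln n + 1)))"
      using exposed_count_exponent_le[OF ab c \<kappa> n k that \<open>B \<le> \<beta> * k + 1\<close>] by (simp flip: exp_add)
    also have "\<dots> = c ^ j * E"
      using c by (simp add: E_def exp_add mult.commute[of "ln c"] exp_of_nat_mult)
    finally show ?thesis .
  qed
  have "card {T. T \<subseteq> {..<n} \<and> card T = k \<and> exposes \<alpha> B S l T} \<le> (real k + 1) * E * c ^ l"
  proof (rule card_exposed_le)
    fix j assume "j \<le> k" "k \<le> j + card S" "j + card S \<le> card {..<n}" "\<alpha> * j + card S < B"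
    then have "real (card S choose (k - j)) * real ((n - card S) choose j) \<le> c ^ j * E"
      by (intro per_size) simp_all
    then show "real (card S choose (k - j)) * real ((card {..<n} - card S) choose j) \<le> c ^ j * E"
      by simp
  qed (use S c in \<open>auto simp: E_def\<close>)
  also have "\<dots> \<le> (n + 1) * E * (1 + c ^ l)"
  proof -
    have "k \<le> n" using k \<kappa> ab mult_right_mono[of \<kappa> 1 n] mult_right_mono[of 1 \<beta> \<kappa>] by simp
    then have "(real k + 1) * E \<le> (n + 1) * E" by (simp add: E_def)
    then show ?thesis by (rule mult_mono) (use c in \<open>auto simp: E_def\<close>)
  qed
  finally show ?thesis .
qed

lemma exp_eventually_dominates:
  fixes \<eta> C a :: real and d :: nat
  assumes "\<eta> > 0"
  shows "eventually (\<lambda>n. C * ((real n + 1) ^ 2 * real n ^ (d + 1) * exp (a * (ln n + 1))) < exp (\<eta> * n)) sequentially"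
proof -
  define Q where "Q n = (real n + 1) ^ 2 * real n ^ (d + 1) * exp (a * (ln n + 1))" for n :: nat
  have "filterlim (\<lambda>n. exp (\<eta> * n) / Q n) at_top sequentially"
    unfolding Q_def using assms by real_asymp
  then have "eventually (\<lambda>n. max C 0 + 1 \<le> exp (\<eta> * n) / Q n) sequentially"
    by (simp add: filterlim_at_top)
  moreover have "eventually (\<lambda>n. 0 < Q n) sequentially"
    using eventually_gt_at_top[of 0] by eventually_elim (simp add: Q_def)
  ultimately show ?thesis
  proof eventually_elim
    case (elim n)
    then have "(max C 0 + 1) * Q n \<le> exp (\<eta> * n)" by (simp add: le_divide_eq)
    moreover have "C * Q n < (max C 0 + 1) * Q n" using elim by (intro mult_strict_right_mono) auto
    ultimately have "C * Q n < exp (\<eta> * n)" by linarith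
    then show ?case by (simp only: Q_def)
  qed
qed

lemma nat_ceiling_minus_one_bounds:
  assumes "x > 1"
  shows "1 \<le> nat \<lceil>x\<rceil> - 1" "real (nat \<lceil>x\<rceil> - 1) < x" "x \<le> real (nat \<lceil>x\<rceil> - 1) + 1"
proof -
  have "2 \<le> \<lceil>x\<rceil>" using assms by (simp add: le_ceiling_iff)
  then have "int (nat \<lceil>x\<rceil> - 1) = \<lceil>x\<rceil> - 1" by linarith
  then have "real (nat \<lceil>x\<rceil> - 1) = of_int \<lceil>x\<rceil> - 1"
    by (metis of_int_1 of_int_diff of_int_of_nat_eq)
  then show "1 \<le> nat \<lceil>x\<rceil> - 1" "real (nat \<lceil>x\<rceil> - 1) < x" "x \<le> real (nat \<lceil>x\<rceil> - 1) + 1"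
    using \<open>2 \<le> \<lceil>x\<rceil>\<close> ceiling_correct[of x] by linarith+
qed

lemma hidden_instance_run_time_ge:
  assumes apx: "is_approx \<alpha> \<beta> A" and ab: "\<alpha> \<ge> 1" "\<beta> \<ge> 1" and c: "c \<ge> 1"
    and \<kappa>: "0 < \<kappa>" "\<beta> * \<kappa> \<le> 1" and n: "1 < \<kappa> * n"
  obtains B T where "B \<le> n" "T \<subseteq> {..<n}" "card T < B"
    "exp (n * amls_inner \<alpha> \<beta> c \<kappa> - (6 * (2 * rounding_gap \<alpha> + 3) + 6) * (ln n + 1))
      \<le> (real n + 1) ^ 2 * real n * run_time c (A {..<n} (\<lambda>_. 1)) (hidden_oracle {..<n} B \<alpha> T)"
proof -
  define k where "k = nat \<lceil>\<kappa> * n\<rceil> - 1"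
  have k: "1 \<le> k" "k < \<kappa> * n" "\<kappa> * n \<le> k + 1"
    using nat_ceiling_minus_one_bounds[OF n] by (simp_all add: k_def)
  have "1 * \<kappa> \<le> \<beta> * \<kappa>" using \<kappa> ab by (intro mult_right_mono) auto
  then have "\<kappa> \<le> 1" using \<kappa> by linarith
  then have "k \<le> n" "1 \<le> n" using k \<kappa> mult_right_mono[of \<kappa> 1 n] by linarith+
  define B where "B = nat \<lfloor>\<beta> * k\<rfloor> + 1"
  have "\<beta> * k < \<beta> * (\<kappa> * n)" using k ab by (intro mult_strict_left_mono) auto
  moreover have "(\<beta> * \<kappa>) * n \<le> 1 * real n" using \<kappa> by (intro mult_right_mono) auto
  ultimately have "\<beta> * k < n" by (simp add: mult.assoc)
  then have "\<lfloor>\<beta> * k\<rfloor> < int n" by (simp add: floor_less_iff)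
  then have "B \<le> n" using ab by (simp add: B_def nat_less_iff Suc_le_eq)
  define K where "K = 6 * (2 * rounding_gap \<alpha> + 3)"
  define E where "E = exp (n * (ent 1 \<kappa> - amls_inner \<alpha> \<beta> c \<kappa>) + K * (ln n + 1))"
  obtain T where T: "T \<subseteq> {..<n}" "card T = k"
    "n choose k \<le> n * ((n + 1) * E) * run_time c (A {..<n} (\<lambda>_. 1)) (hidden_oracle {..<n} B \<alpha> T)"
    using hidden_instance_run_time[OF apx ab c _ k(1) B_def \<open>B \<le> n\<close>, of "(n + 1) * E"]
      card_exposed_hidden_le[OF ab c _ \<kappa>(2) \<open>1 \<le> n\<close> k(2,3) B_def] \<kappa>
    by (auto simp: E_def K_def mult.assoc)
  have "card T < B" using less_nat_floor_mult_plus_1[OF ab(2), of k] T(2) B_def by simp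
  have "exp (n * ent 1 \<kappa> - 6 * (ln n + 1)) \<le> (n + 1) * real (n choose k)"
    using exp_ent_1_le_binomial[of \<kappa> n k] \<kappa> \<open>\<kappa> \<le> 1\<close> \<open>1 \<le> n\<close> \<open>k \<le> n\<close> k by (simp add: abs_le_iff)
  also have "\<dots> \<le> (n + 1) * (n * ((n + 1) * E) * run_time c (A {..<n} (\<lambda>_. 1)) (hidden_oracle {..<n} B \<alpha> T))"
    using T(3) by (intro mult_left_mono) auto
  also have "\<dots> = exp (n * (ent 1 \<kappa> - amls_inner \<alpha> \<beta> c \<kappa>) + K * (ln n + 1))
      * ((real n + 1) ^ 2 * real n * run_time c (A {..<n} (\<lambda>_. 1)) (hidden_oracle {..<n} B \<alpha> T))"
    by (simp add: E_def power2_eq_square algebra_simps)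
  finally have "exp (n * ent 1 \<kappa> - 6 * (ln n + 1)) / exp (n * (ent 1 \<kappa> - amls_inner \<alpha> \<beta> c \<kappa>) + K * (ln n + 1))
      \<le> (real n + 1) ^ 2 * real n * run_time c (A {..<n} (\<lambda>_. 1)) (hidden_oracle {..<n} B \<alpha> T)"
    by (simp add: divide_le_eq mult.commute)
  moreover have "exp (n * ent 1 \<kappa> - 6 * (ln n + 1)) / exp (n * (ent 1 \<kappa> - amls_inner \<alpha> \<beta> c \<kappa>) + K * (ln n + 1))
      = exp (n * amls_inner \<alpha> \<beta> c \<kappa> - (K + 6) * (ln n + 1))"
    by (simp flip: exp_diff) (simp add: algebra_simps)
  ultimately have "exp (n * amls_inner \<alpha> \<beta> c \<kappa> - (K + 6) * (ln n + 1))
      \<le> (real n + 1) ^ 2 * real n * run_time c (A {..<n} (\<lambda>_. 1)) (hidden_oracle {..<n} B \<alpha> T)"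
    by simp
  then show ?thesis unfolding K_def by (rule that[OF \<open>B \<le> n\<close> T(1) \<open>card T < B\<close>])
qed

lemma no_approx_below_amls:
  assumes apx: "is_approx \<alpha> \<beta> A" and ab: "\<alpha> \<ge> 1" "\<beta> \<ge> 1" and c: "c \<ge> 1"
    and time: "runs_in_time_poly_exp \<alpha> c A b" and b: "0 < b" "b < amls \<alpha> c \<beta>"
  shows False
proof -
  obtain C d N where bound: "\<forall>U w F orc. finite U \<and> monotone_sys U F \<and> ext_oracle \<alpha> U w F orc \<and> card U \<ge> N \<longrightarrow>
      run_time c (A U w) orc \<le> C * real (card U) ^ d * b ^ card U"
    using time unfolding runs_in_time_poly_exp_def by blast
  obtain \<kappa> where \<kappa>: "0 < \<kappa>" "\<beta> * \<kappa> \<le> 1" "ln b < amls_inner \<alpha> \<beta> c \<kappa>"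
    using exists_kappa_below_amls[OF ab c b] by blast
  define \<eta> where "\<eta> = amls_inner \<alpha> \<beta> c \<kappa> - ln b"
  define K where "K = 6 * (2 * rounding_gap \<alpha> + 3) + 6"
  have "\<eta> > 0" using \<kappa> by (simp add: \<eta>_def)
  have "eventually (\<lambda>n. 1 < \<kappa> * real n) sequentially" using \<kappa>(1) by real_asymp
  then have "eventually (\<lambda>n. N \<le> n \<and> 1 < \<kappa> * n \<and>
      C * ((real n + 1) ^ 2 * real n ^ (d + 1) * exp (K * (ln n + 1))) < exp (\<eta> * n)) sequentially"
    using eventually_ge_at_top[of N] exp_eventually_dominates[OF \<open>\<eta> > 0\<close>, of C d K]
    by eventually_elim auto
  then obtain n where n: "N \<le> n" "1 < \<kappa> * n"
      "C * ((real n + 1) ^ 2 * real n ^ (d + 1) * exp (K * (ln n + 1))) < exp (\<eta> * n)"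
    by (auto simp: eventually_sequentially)
  obtain B T where "B \<le> n" "T \<subseteq> {..<n}" "card T < B" and slow:
    "exp (n * amls_inner \<alpha> \<beta> c \<kappa> - K * (ln n + 1))
      \<le> (real n + 1) ^ 2 * real n * run_time c (A {..<n} (\<lambda>_. 1)) (hidden_oracle {..<n} B \<alpha> T)"
    unfolding K_def by (rule hidden_instance_run_time_ge[OF apx ab c \<kappa>(1,2) n(2)])
  have "run_time c (A {..<n} (\<lambda>_. 1)) (hidden_oracle {..<n} B \<alpha> T) \<le> C * real n ^ d * exp (n * ln b)"
    using run_time_hidden_le[OF bound ab(1) n(1) \<open>B \<le> n\<close> \<open>T \<subseteq> {..<n}\<close> \<open>card T < B\<close>] b
    by (simp add: exp_of_nat_mult)
  then have "(real n + 1) ^ 2 * real n * run_time c (A {..<n} (\<lambda>_. 1)) (hidden_oracle {..<n} B \<alpha> T)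
      \<le> (real n + 1) ^ 2 * real n * (C * real n ^ d * exp (n * ln b))"
    by (intro mult_left_mono) auto
  with slow have "exp (n * amls_inner \<alpha> \<beta> c \<kappa> - K * (ln n + 1))
      \<le> C * ((real n + 1) ^ 2 * real n ^ (d + 1)) * exp (n * ln b)"
    by (simp add: algebra_simps)
  then have "exp (n * amls_inner \<alpha> \<beta> c \<kappa> - K * (ln n + 1)) / exp (n * ln b) * exp (K * (ln n + 1))
      \<le> C * ((real n + 1) ^ 2 * real n ^ (d + 1)) * exp (K * (ln n + 1))"
    by (simp add: divide_le_eq)
  moreover have "exp (n * amls_inner \<alpha> \<beta> c \<kappa> - K * (ln n + 1)) / exp (n * ln b) * exp (K * (ln n + 1)) = exp (\<eta> * n)"
    by (simp add: \<eta>_def flip: exp_diff exp_add) (simp add: algebra_simps)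
  ultimately show False using n(3) by (simp add: mult.assoc)
qed

theorem corollary2p7:
  fixes \<alpha> c \<beta> \<epsilon> :: real
  assumes "\<alpha> \<ge> 1" and "c \<ge> 1" and "\<beta> \<ge> 1" and "\<epsilon> > 0"
  shows "\<not> (\<exists>A. is_approx \<alpha> \<beta> A \<and> runs_in_time_poly_exp \<alpha> c A (amls \<alpha> c \<beta> - \<epsilon>))"
proof
  assume "\<exists>A. is_approx \<alpha> \<beta> A \<and> runs_in_time_poly_exp \<alpha> c A (amls \<alpha> c \<beta> - \<epsilon>)"
  then obtain A where apx: "is_approx \<alpha> \<beta> A" and time: "runs_in_time_poly_exp \<alpha> c A (amls \<alpha> c \<beta> - \<epsilon>)"
    by blast
  show False
  proof (cases "amls \<alpha> c \<beta> - \<epsilon> \<le> 0")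
    case True
    with no_approx_nonpos_base[OF apx assms(1,3,2) time] show False by simp
  next
    case False
    with no_approx_below_amls[OF apx assms(1,3,2) time] assms(4) show False by simp
  qed
qed

end
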